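(* There is an absolute constant $C>0$ such that the following holds. Let $H_0,H_1$ be Hermitian operators on an $n$-qubit Hilbert space, $H_s=(1-s)H_0+sH_1$, and let $|\alpha_0\rangle,|\alpha_1\rangle$ be normalized ground states of $H_0,H_1$. Let $\mathcal V$ be a subspace spanned by eigenvectors of $H_0$ with $\|\Pi_{\mathcal V}|\alpha_0\rangle\|=1$ and $\|\Pi_{\mathcal V}|\alpha_1\rangle\|\le1/10$, and let $\beta$ be the escape rate of $\mathcal V$ by $H_1$. Then the minimal gap $\Delta=\min_{s\in[0,1]}(\lambda_1(H_s)-\lambda_0(H_s))$ satisfies $$\Delta\le C\,\big(\beta\,\|H_0-H_1\|^3\big)^{1/4}.$$ (The paper states this with $C=100^{1/4}$.)
   Context: Escape rate: for a subspace $\mathcal V$ and Hamiltonian $H$, the escape rate of $\mathcal V$ by $H$ is $\beta=\max_{v\in\mathcal V,\|v\|=1}\|\Pi_{\mathcal V^\perp}H|v\rangle\|$, with $\Pi_{\mathcal V}$ the orthogonal projection onto $\mathcal V$. $\lambda_0(H)\le\lambda_1(H)$ denote the two smallest eigenvalues of $H$ counted with multiplicity. *)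

theory Defs
  imports "Jordan_Normal_Form.Char_Poly" "Jordan_Normal_Form.Conjugate"
begin

text \<open>Complex N x N matrices (JNF type complex mat), N = 2^n for n qubits.\<close>

definition hermitian :: "nat \<Rightarrow> complex mat \<Rightarrow> bool" where
  "hermitian N A \<longleftrightarrow> A \<in> carrier_mat N N \<and>
     (\<forall>i<N. \<forall>j<N. A $$ (i,j) = cnj (A $$ (j,i)))"

definition vnorm :: "complex vec \<Rightarrow> real" where
  "vnorm v = sqrt (Re (v \<bullet>c v))"

definition opnorm :: "complex mat \<Rightarrow> real" where
  "opnorm A = Sup {vnorm (A *\<^sub>v v) | v. v \<in> carrier_vec (dim_col A) \<and> vnorm v = 1}"

definition lincomb :: "nat \<Rightarrow> complex list \<Rightarrow> complex vec list \<Rightarrow> complex vec" where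
  "lincomb N cs ws = foldr (\<lambda>(c,w) acc. c \<cdot>\<^sub>v w + acc) (zip cs ws) (0\<^sub>v N)"

definition cspan :: "nat \<Rightarrow> complex vec set \<Rightarrow> complex vec set" where
  "cspan N S = {lincomb N cs ws | cs ws. set ws \<subseteq> S \<and> length cs = length ws}"

definition ocomp :: "nat \<Rightarrow> complex vec set \<Rightarrow> complex vec set" where
  "ocomp N V = {x \<in> carrier_vec N. \<forall>y\<in>V. x \<bullet>c y = 0}"

definition proj :: "nat \<Rightarrow> complex vec set \<Rightarrow> complex vec \<Rightarrow> complex vec" where
  "proj N V v = (THE w. w \<in> V \<and> v - w \<in> ocomp N V)"

definition escape_rate :: "nat \<Rightarrow> complex vec set \<Rightarrow> complex mat \<Rightarrow> real" where
  "escape_rate N V H = Sup {vnorm (proj N (ocomp N V) (H *\<^sub>v v)) | v. v \<in> V \<and> vnorm v = 1}"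

text \<open>Eigenvalues counted with (algebraic) multiplicity: eig_count H x is the number
  of eigenvalues with real part at most x; lam H k is the (k+1)-th smallest eigenvalue
  (k = 0, 1, ...), i.e. lam H 0 \<le> lam H 1 are the two smallest.\<close>
definition eig_count :: "complex mat \<Rightarrow> real \<Rightarrow> nat" where
  "eig_count H x = (\<Sum>e\<in>{e. poly (char_poly H) e = 0 \<and> Re e \<le> x}. order e (char_poly H))"

definition lam :: "complex mat \<Rightarrow> nat \<Rightarrow> real" where
  "lam H k = Inf {x. k < eig_count H x}"

definition ground_state :: "nat \<Rightarrow> complex mat \<Rightarrow> complex vec \<Rightarrow> bool" where
  "ground_state N H a \<longleftrightarrow> a \<in> carrier_vec N \<and> vnorm a = 1 \<and>
     H *\<^sub>v a = complex_of_real (lam H 0) \<cdot>\<^sub>v a"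

definition interp :: "complex mat \<Rightarrow> complex mat \<Rightarrow> real \<Rightarrow> complex mat" where
  "interp H0 H1 s = complex_of_real (1 - s) \<cdot>\<^sub>m H0 + complex_of_real s \<cdot>\<^sub>m H1"

end

theory Submission
  imports Defs
begin

text \<open>Write E_V(s) and E_W(s) for the minima of the quadratic form of
  H_s = (1 - s) H_0 + s H_1 on the unit vectors of V and of its orthogonal complement W.
  Because H_0 maps V into itself, the block of H_s coupling V and W is s times the block of H_1,
  whose norm is the escape rate beta. A ground vector of H_s splits into its V- and W-parts, and a
  suitable combination of near-minimisers in V and W is orthogonal to it; this bounds the gap of
  H_s by |E_W(s) - E_V(s)| + 2 beta. At s = 0 the ground state of H_0 lies in V, so
  E_V(0) \<le> E_W(0); at s = 1 the ground state of H_1 lies mostly in W, so E_W(1) \<le> E_V(1) + beta.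
  By continuity some s has |E_W(s) - E_V(s)| \<le> beta, hence a gap of at most 3 beta, and
  beta \<le> ||H_0 - H_1|| turns this into the bound with C = 3.\<close>

section \<open>Inner product and norm on C^n\<close>

lemma index_mult_mat_vec_sum:
  "A \<in> carrier_mat m k \<Longrightarrow> v \<in> carrier_vec k \<Longrightarrow> i < m \<Longrightarrow>
   (A *\<^sub>v v) $ i = (\<Sum>l<k. A $$ (i,l) * v $ l)"
  by (auto simp: scalar_prod_def atLeast0LessThan)

lemma index_mult_mat_sum:
  "A \<in> carrier_mat m k \<Longrightarrow> B \<in> carrier_mat k n \<Longrightarrow> i < m \<Longrightarrow> j < n \<Longrightarrow>
   (A * B) $$ (i,j) = (\<Sum>l<k. A $$ (i,l) * B $$ (l,j))"
  by (auto simp: scalar_prod_def atLeast0LessThan)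

lemma smult_zero_vec_right[simp]: "(a :: 'a :: comm_ring) \<cdot>\<^sub>v 0\<^sub>v N = 0\<^sub>v N"
  by (intro eq_vecI) auto

lemma mult_mat_zero_vec[simp]: "H \<in> carrier_mat N M \<Longrightarrow> (H :: 'a :: comm_ring mat) *\<^sub>v 0\<^sub>v M = 0\<^sub>v N"
  by (intro eq_vecI) (auto simp: scalar_prod_def)

lemma minus_eq_0_vec_iff:
  fixes x y :: "'a :: ab_group_add vec"
  assumes x: "x \<in> carrier_vec n" and y: "y \<in> carrier_vec n"
  shows "x - y = 0\<^sub>v n \<longleftrightarrow> x = y"
proof
  assume xy: "x - y = 0\<^sub>v n"
  show "x = y"
  proof (rule eq_vecI)
    fix i assume "i < dim_vec y"
    then show "x $ i = y $ i" using arg_cong[OF xy, of "\<lambda>v. v $ i"] x y by auto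
  qed (use x y in auto)
qed (use y in auto)

lemma cscalar_prod_sum:
  "w \<in> carrier_vec n \<Longrightarrow> v \<bullet>c w = (\<Sum>i<n. v $ i * cnj (w $ i))"
  by (auto simp: scalar_prod_def atLeast0LessThan)

lemma cscalar_prod_swap:
  fixes x y :: "complex vec"
  shows "x \<in> carrier_vec n \<Longrightarrow> y \<in> carrier_vec n \<Longrightarrow> y \<bullet>c x = cnj (x \<bullet>c y)"
  by (simp add: cscalar_prod_sum[of _ n] mult.commute)

lemma cscalar_prod_add_left:
  fixes x y z :: "complex vec"
  shows "x \<in> carrier_vec n \<Longrightarrow> y \<in> carrier_vec n \<Longrightarrow> z \<in> carrier_vec n \<Longrightarrow>
    (x + y) \<bullet>c z = x \<bullet>c z + y \<bullet>c z"
  by (rule add_scalar_prod_distrib) auto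

lemma cscalar_prod_add_right:
  fixes x y z :: "complex vec"
  shows "x \<in> carrier_vec n \<Longrightarrow> y \<in> carrier_vec n \<Longrightarrow> z \<in> carrier_vec n \<Longrightarrow>
    z \<bullet>c (x + y) = z \<bullet>c x + z \<bullet>c y"
  by (simp add: conjugate_add_vec[of _ n] scalar_prod_add_distrib[of _ n])

lemma cscalar_prod_minus_left:
  fixes x y z :: "complex vec"
  shows "x \<in> carrier_vec n \<Longrightarrow> y \<in> carrier_vec n \<Longrightarrow> z \<in> carrier_vec n \<Longrightarrow>
    (x - y) \<bullet>c z = x \<bullet>c z - y \<bullet>c z"
  by (rule minus_scalar_prod_distrib) auto

lemma cscalar_prod_minus_right:
  fixes x y z :: "complex vec"
  assumes "x \<in> carrier_vec n" "y \<in> carrier_vec n" "z \<in> carrier_vec n"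
  shows "z \<bullet>c (x - y) = z \<bullet>c x - z \<bullet>c y"
proof -
  have "conjugate (x - y) = conjugate x - conjugate y"
    using assms by (intro eq_vecI) auto
  then show ?thesis
    using assms by (simp add: scalar_prod_minus_distrib[of _ n])
qed

lemma cscalar_prod_smult_left:
  fixes x z :: "complex vec"
  shows "x \<in> carrier_vec n \<Longrightarrow> z \<in> carrier_vec n \<Longrightarrow> (a \<cdot>\<^sub>v x) \<bullet>c z = a * (x \<bullet>c z)"
  by simp

lemma cscalar_prod_smult_right:
  fixes x z :: "complex vec"
  shows "x \<in> carrier_vec n \<Longrightarrow> z \<in> carrier_vec n \<Longrightarrow> z \<bullet>c (a \<cdot>\<^sub>v x) = cnj a * (z \<bullet>c x)"
  by (simp add: conjugate_smult_vec)

lemma cscalar_prod_self_sum: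
  "x \<in> carrier_vec n \<Longrightarrow> x \<bullet>c x = of_real (\<Sum>i<n. (cmod (x $ i))^2)"
  unfolding of_real_sum cscalar_prod_sum
  by (rule sum.cong, simp, rule complex_norm_square[symmetric])

lemma vnorm_square_sum: "x \<in> carrier_vec n \<Longrightarrow> (vnorm x)^2 = (\<Sum>i<n. (cmod (x $ i))^2)"
  by (simp add: vnorm_def cscalar_prod_self_sum sum_nonneg)

lemma cscalar_prod_self: "x \<in> carrier_vec n \<Longrightarrow> x \<bullet>c x = of_real ((vnorm x)^2)"
  by (simp add: cscalar_prod_self_sum vnorm_square_sum)

lemma vnorm_square: "x \<in> carrier_vec n \<Longrightarrow> (vnorm x)^2 = Re (x \<bullet>c x)"
  by (simp add: cscalar_prod_self_sum vnorm_square_sum)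

lemma vnorm_nonneg: "0 \<le> vnorm x"
  using cscalar_prod_self_sum[OF carrier_vec_dim_vec, of x] by (simp add: vnorm_def sum_nonneg)

lemma vnorm_eq_0_iff: "x \<in> carrier_vec n \<Longrightarrow> vnorm x = 0 \<longleftrightarrow> x = 0\<^sub>v n"
  using conjugate_square_eq_0_vec[of x n] by (simp add: cscalar_prod_self)

lemma vnorm_pos: "x \<in> carrier_vec n \<Longrightarrow> x \<noteq> 0\<^sub>v n \<Longrightarrow> 0 < vnorm x"
  using vnorm_eq_0_iff vnorm_nonneg by (metis less_eq_real_def)

lemma vnorm_smult: "x \<in> carrier_vec n \<Longrightarrow> vnorm (a \<cdot>\<^sub>v x) = cmod a * vnorm x"
  by (simp add: vnorm_def cscalar_prod_self_sum norm_mult power_mult_distrib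
      flip: sum_distrib_left add: real_sqrt_mult)

lemma unit_vec_dim_pos:
  assumes x: "x \<in> carrier_vec N" and nx: "vnorm x = 1"
  shows "0 < N"
proof (rule ccontr)
  assume "\<not> 0 < N"
  then have "x = 0\<^sub>v N" using x by (intro eq_vecI) auto
  then show False using nx vnorm_eq_0_iff[OF x] by simp
qed

lemma vnorm_normalize:
  "x \<in> carrier_vec n \<Longrightarrow> x \<noteq> 0\<^sub>v n \<Longrightarrow> vnorm ((1 / of_real (vnorm x)) \<cdot>\<^sub>v x) = 1"
  using vnorm_pos[of x n] by (simp add: vnorm_smult norm_divide)

lemma norm_cscalar_prod_le:
  assumes x: "x \<in> carrier_vec n" and y: "y \<in> carrier_vec n"
  shows "cmod (x \<bullet>c y) \<le> vnorm x * vnorm y"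
proof (cases "y = 0\<^sub>v n")
  case True
  then show ?thesis using x by (simp add: vnorm_nonneg)
next
  case False
  define p where "p = x \<bullet>c y"
  define q where "q = (vnorm y)^2"
  have q: "q > 0" unfolding q_def using vnorm_pos[OF y False] by simp
  have yy: "y \<bullet>c y = of_real q" unfolding q_def by (rule cscalar_prod_self[OF y])
  have yx: "y \<bullet>c x = cnj p" unfolding p_def by (rule cscalar_prod_swap[OF x y])
  have pp: "p * cnj p = of_real ((cmod p)^2)" by (rule complex_norm_square[symmetric])
  \<comment> \<open>c \<cdot> y is the component of x along y\<close>
  define c where "c = p / of_real q"
  define R where "R = (vnorm x)^2 - (cmod p)^2 / q"
  have "(x - c \<cdot>\<^sub>v y) \<bullet>c (x - c \<cdot>\<^sub>v y) = x \<bullet>c x - cnj c * p - c * cnj p + c * cnj c * of_real q"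
    using x y yx yy
    by (simp add: cscalar_prod_minus_left[of _ n] cscalar_prod_minus_right[of _ n]
        cscalar_prod_smult_right[of _ n] p_def algebra_simps)
  also have "\<dots> = of_real R"
    using pp q unfolding c_def R_def cscalar_prod_self[OF x]
    by (simp add: field_simps power2_eq_square)
  finally have "R = (vnorm (x - c \<cdot>\<^sub>v y))^2"
    using vnorm_square[of "x - c \<cdot>\<^sub>v y" n] x y by simp
  then have "(cmod p)^2 / q \<le> (vnorm x)^2"
    unfolding R_def by (metis diff_ge_0_iff_ge zero_le_power2)
  then have "(cmod p)^2 \<le> (vnorm x * vnorm y)^2"
    using q unfolding q_def by (simp add: divide_le_eq power_mult_distrib)
  then show ?thesis
    unfolding p_def by (rule power2_le_imp_le) (simp add: vnorm_nonneg)
qed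

lemma vnorm_add_square:
  assumes x: "x \<in> carrier_vec n" and y: "y \<in> carrier_vec n" and xy: "x \<bullet>c y = 0"
  shows "(vnorm (x + y))^2 = (vnorm x)^2 + (vnorm y)^2"
proof -
  have "y \<bullet>c x = 0" using cscalar_prod_swap[OF x y] xy by simp
  then have "(x + y) \<bullet>c (x + y) = x \<bullet>c x + y \<bullet>c y"
    using x y xy by (simp add: cscalar_prod_add_left[of _ n] cscalar_prod_add_right[of _ n])
  then show ?thesis
    using x y by (simp add: vnorm_square[of _ n])
qed

definition frobenius_norm :: "complex mat \<Rightarrow> real" where
  "frobenius_norm A = sqrt (\<Sum>i<dim_row A. \<Sum>j<dim_col A. (cmod (A $$ (i,j)))^2)"

lemma frobenius_norm_nonneg: "0 \<le> frobenius_norm A"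
  unfolding frobenius_norm_def by (simp add: sum_nonneg)

lemma vnorm_mult_mat_vec_le:
  assumes A: "A \<in> carrier_mat m k" and x: "x \<in> carrier_vec k"
  shows "vnorm (A *\<^sub>v x) \<le> frobenius_norm A * vnorm x"
proof -
  define r where "r i = vec k (\<lambda>l. cnj (A $$ (i,l)))" for i
  have r: "r i \<in> carrier_vec k" for i unfolding r_def by simp
  have Ax: "(A *\<^sub>v x) $ i = x \<bullet>c r i" if "i < m" for i
    unfolding cscalar_prod_sum[OF r] using that A x
    by (simp add: index_mult_mat_vec_sum r_def mult.commute del: index_mult_mat_vec)
  have r_norm: "(vnorm (r i))^2 = (\<Sum>l<k. (cmod (A $$ (i,l)))^2)" for i
    unfolding vnorm_square_sum[OF r] by (auto simp: r_def intro!: sum.cong)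
  have "(vnorm (A *\<^sub>v x))^2 = (\<Sum>i<m. (cmod ((A *\<^sub>v x) $ i))^2)"
    using A x by (simp add: vnorm_square_sum[of _ m])
  also have "\<dots> \<le> (\<Sum>i<m. (vnorm x)^2 * (vnorm (r i))^2)"
  proof (rule sum_mono)
    fix i assume "i \<in> {..<m}"
    then have "cmod ((A *\<^sub>v x) $ i) \<le> vnorm x * vnorm (r i)"
      using Ax norm_cscalar_prod_le[OF x r] by simp
    then show "(cmod ((A *\<^sub>v x) $ i))^2 \<le> (vnorm x)^2 * (vnorm (r i))^2"
      by (metis norm_ge_zero power_mono power_mult_distrib)
  qed
  also have "\<dots> = (frobenius_norm A * vnorm x)^2"
    using A unfolding frobenius_norm_def r_norm
    by (simp add: sum_distrib_left sum_nonneg power_mult_distrib mult.commute)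
  finally show ?thesis
    by (rule power2_le_imp_le) (simp add: frobenius_norm_nonneg vnorm_nonneg)
qed

lemma vnorm_le_opnorm:
  assumes A: "A \<in> carrier_mat n m" and x: "x \<in> carrier_vec m" "vnorm x = 1"
  shows "vnorm (A *\<^sub>v x) \<le> opnorm A"
  unfolding opnorm_def
proof (rule cSup_upper)
  show "vnorm (A *\<^sub>v x) \<in> {vnorm (A *\<^sub>v v) |v. v \<in> carrier_vec (dim_col A) \<and> vnorm v = 1}"
    using A x by auto
  show "bdd_above {vnorm (A *\<^sub>v v) |v. v \<in> carrier_vec (dim_col A) \<and> vnorm v = 1}"
  proof (rule bdd_aboveI[of _ "frobenius_norm A"], safe)
    fix v assume "v \<in> carrier_vec (dim_col A)" "vnorm v = 1"
    then show "vnorm (A *\<^sub>v v) \<le> frobenius_norm A" using vnorm_mult_mat_vec_le[OF A, of v] A by simp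
  qed
qed

definition adjoint :: "complex mat \<Rightarrow> complex mat" where
  "adjoint A = mat (dim_col A) (dim_row A) (\<lambda>(i,j). cnj (A $$ (j,i)))"

lemma adjoint_carrier[simp]: "A \<in> carrier_mat m n \<Longrightarrow> adjoint A \<in> carrier_mat n m"
  by (auto simp: adjoint_def)

lemma adjoint_dim[simp]: "dim_row (adjoint A) = dim_col A" "dim_col (adjoint A) = dim_row A"
  by (auto simp: adjoint_def)

lemma adjoint_index[simp]:
  "i < dim_col A \<Longrightarrow> j < dim_row A \<Longrightarrow> adjoint A $$ (i,j) = cnj (A $$ (j,i))"
  by (auto simp: adjoint_def)

lemma adjoint_adjoint[simp]: "adjoint (adjoint A) = A"
  by (rule eq_matI) auto

lemma adjoint_mult:
  assumes A: "A \<in> carrier_mat m k" and B: "B \<in> carrier_mat k n"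
  shows "adjoint (A * B) = adjoint B * adjoint A"
proof (rule eq_matI)
  fix i j assume "i < dim_row (adjoint B * adjoint A)" "j < dim_col (adjoint B * adjoint A)"
  then have ij: "i < n" "j < m" using A B by auto
  have "adjoint (A * B) $$ (i,j) = cnj (\<Sum>l<k. A $$ (j,l) * B $$ (l,i))"
    using ij A B by (simp add: index_mult_mat_sum[OF A B] del: index_mult_mat(1))
  also have "\<dots> = (adjoint B * adjoint A) $$ (i,j)"
    using ij A B by (auto simp: index_mult_mat_sum[of _ n k _ m] mult.commute intro!: sum.cong
        simp del: index_mult_mat(1))
  finally show "adjoint (A * B) $$ (i,j) = (adjoint B * adjoint A) $$ (i,j)" .
qed (use A B in auto)

lemma hermitian_iff_adjoint: "hermitian N A \<longleftrightarrow> A \<in> carrier_mat N N \<and> adjoint A = A"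
proof -
  have "adjoint A = A \<longleftrightarrow> (\<forall>i<N. \<forall>j<N. A $$ (i,j) = cnj (A $$ (j,i)))"
    if "A \<in> carrier_mat N N"
  proof
    assume adj: "adjoint A = A"
    show "\<forall>i<N. \<forall>j<N. A $$ (i,j) = cnj (A $$ (j,i))"
    proof (intro allI impI)
      fix i j assume "i < N" "j < N"
      then have "adjoint A $$ (i,j) = cnj (A $$ (j,i))" using that by simp
      then show "A $$ (i,j) = cnj (A $$ (j,i))" by (simp add: adj)
    qed
  next
    assume h: "\<forall>i<N. \<forall>j<N. A $$ (i,j) = cnj (A $$ (j,i))"
    show "adjoint A = A"
    proof (rule eq_matI)
      fix i j assume "i < dim_row A" "j < dim_col A"
      then show "adjoint A $$ (i,j) = A $$ (i,j)"
        using that h[rule_format, of i j] by simp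
    qed (use that in auto)
  qed
  then show ?thesis unfolding hermitian_def by blast
qed

lemma cscalar_prod_adjoint:
  assumes A: "A \<in> carrier_mat n m" and x: "x \<in> carrier_vec m" and y: "y \<in> carrier_vec n"
  shows "(A *\<^sub>v x) \<bullet>c y = x \<bullet>c (adjoint A *\<^sub>v y)"
proof -
  have "(A *\<^sub>v x) \<bullet>c y = (\<Sum>i<n. (\<Sum>l<m. A $$ (i,l) * x $ l) * cnj (y $ i))"
    unfolding cscalar_prod_sum[OF y] using A x
    by (intro sum.cong) (simp_all add: index_mult_mat_vec_sum del: index_mult_mat_vec)
  also have "\<dots> = (\<Sum>l<m. \<Sum>i<n. x $ l * (A $$ (i,l) * cnj (y $ i)))"
    by (subst sum.swap) (simp add: sum_distrib_left sum_distrib_right mult_ac)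
  also have "\<dots> = (\<Sum>l<m. x $ l * cnj ((adjoint A *\<^sub>v y) $ l))"
    using A y by (intro sum.cong)
      (auto simp: index_mult_mat_vec_sum[of _ m n] sum_distrib_left simp del: index_mult_mat_vec)
  also have "\<dots> = x \<bullet>c (adjoint A *\<^sub>v y)"
    by (rule cscalar_prod_sum[symmetric]) (rule mult_mat_vec_carrier[OF adjoint_carrier[OF A] y])
  finally show ?thesis .
qed

lemma hermitian_cscalar_prod:
  "hermitian N A \<Longrightarrow> x \<in> carrier_vec N \<Longrightarrow> y \<in> carrier_vec N \<Longrightarrow>
    (A *\<^sub>v x) \<bullet>c y = x \<bullet>c (A *\<^sub>v y)"
  using cscalar_prod_adjoint[of A N N x y] by (simp add: hermitian_iff_adjoint)

definition qform :: "complex mat \<Rightarrow> complex vec \<Rightarrow> real" where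
  "qform H x = Re ((H *\<^sub>v x) \<bullet>c x)"

lemma qform_smult:
  assumes H: "H \<in> carrier_mat N N" and x: "x \<in> carrier_vec N"
  shows "qform H (a \<cdot>\<^sub>v x) = (cmod a)^2 * qform H x"
proof -
  have "(H *\<^sub>v (a \<cdot>\<^sub>v x)) \<bullet>c (a \<cdot>\<^sub>v x) = (a * cnj a) * ((H *\<^sub>v x) \<bullet>c x)"
    using H x by (simp add: mult_mat_vec cscalar_prod_smult_right[of _ N] mult.assoc)
  also have "a * cnj a = of_real ((cmod a)^2)" by (rule complex_norm_square[symmetric])
  finally show ?thesis unfolding qform_def by simp
qed

lemma qform_add:
  assumes h: "hermitian N H" and p: "p \<in> carrier_vec N" and q: "q \<in> carrier_vec N"
  shows "qform H (p + q) = qform H p + qform H q + 2 * Re ((H *\<^sub>v p) \<bullet>c q)"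
proof -
  have H: "H \<in> carrier_mat N N" using h by (simp add: hermitian_iff_adjoint)
  have Hp: "H *\<^sub>v p \<in> carrier_vec N" and Hq: "H *\<^sub>v q \<in> carrier_vec N" using H p q by auto
  have "(H *\<^sub>v q) \<bullet>c p = cnj ((H *\<^sub>v p) \<bullet>c q)"
    using hermitian_cscalar_prod[OF h q p] cscalar_prod_swap[OF Hp q] by simp
  then show ?thesis
    unfolding qform_def using H p q Hp Hq
    by (simp add: mult_add_distrib_mat_vec cscalar_prod_add_left[of _ N]
        cscalar_prod_add_right[of _ N])
qed

lemma abs_qform_le:
  assumes H: "H \<in> carrier_mat N N" and x: "x \<in> carrier_vec N"
  shows "\<bar>qform H x\<bar> \<le> frobenius_norm H * (vnorm x)^2"
proof -
  have "\<bar>qform H x\<bar> \<le> vnorm (H *\<^sub>v x) * vnorm x"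
    unfolding qform_def using abs_Re_le_cmod norm_cscalar_prod_le[of "H *\<^sub>v x" N x] H x
    by (metis mult_mat_vec_carrier order.trans)
  also have "\<dots> \<le> frobenius_norm H * vnorm x * vnorm x"
    by (rule mult_right_mono[OF vnorm_mult_mat_vec_le[OF H x] vnorm_nonneg])
  finally show ?thesis by (simp add: power2_eq_square mult.assoc)
qed

lemma interp_carrier:
  "H0 \<in> carrier_mat N N \<Longrightarrow> H1 \<in> carrier_mat N N \<Longrightarrow> interp H0 H1 s \<in> carrier_mat N N"
  unfolding interp_def by simp

lemma hermitian_interp:
  assumes h0: "hermitian N H0" and h1: "hermitian N H1"
  shows "hermitian N (interp H0 H1 s)"
proof -
  have H0: "H0 \<in> carrier_mat N N" and H1: "H1 \<in> carrier_mat N N"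
    using h0 h1 by (simp_all add: hermitian_iff_adjoint)
  have "adjoint (interp H0 H1 s) = interp (adjoint H0) (adjoint H1) s"
    using H0 H1 unfolding interp_def by (intro eq_matI) auto
  then show ?thesis
    using h0 h1 H0 H1 interp_carrier[OF H0 H1] by (simp add: hermitian_iff_adjoint)
qed

lemma smult_mat_mult_mat_vec:
  "A \<in> carrier_mat n m \<Longrightarrow> x \<in> carrier_vec m \<Longrightarrow> (a \<cdot>\<^sub>m A) *\<^sub>v x = (a::complex) \<cdot>\<^sub>v (A *\<^sub>v x)"
  by (intro eq_vecI) (auto simp: scalar_prod_def sum_distrib_left mult.assoc)

lemma interp_mult_mat_vec:
  assumes "H0 \<in> carrier_mat N N" "H1 \<in> carrier_mat N N" "x \<in> carrier_vec N"
  shows "interp H0 H1 s *\<^sub>v x = of_real (1 - s) \<cdot>\<^sub>v (H0 *\<^sub>v x) + of_real s \<cdot>\<^sub>v (H1 *\<^sub>v x)"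
  unfolding interp_def using assms
  by (subst add_mult_distrib_mat_vec[of _ N N]) (auto simp: smult_mat_mult_mat_vec)

lemma interp_cscalar_prod:
  assumes "H0 \<in> carrier_mat N N" "H1 \<in> carrier_mat N N" "x \<in> carrier_vec N" "y \<in> carrier_vec N"
  shows "(interp H0 H1 s *\<^sub>v x) \<bullet>c y = (1 - s) * ((H0 *\<^sub>v x) \<bullet>c y) + s * ((H1 *\<^sub>v x) \<bullet>c y)"
  using assms by (simp add: interp_mult_mat_vec cscalar_prod_add_left[of _ N])

lemma qform_interp:
  "H0 \<in> carrier_mat N N \<Longrightarrow> H1 \<in> carrier_mat N N \<Longrightarrow> x \<in> carrier_vec N \<Longrightarrow>
    qform (interp H0 H1 s) x = (1 - s) * qform H0 x + s * qform H1 x"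
  unfolding qform_def by (simp add: interp_cscalar_prod)

lemma interp_0: "H0 \<in> carrier_mat N N \<Longrightarrow> H1 \<in> carrier_mat N N \<Longrightarrow> interp H0 H1 0 = H0"
  unfolding interp_def by (intro eq_matI) auto

lemma interp_1: "H0 \<in> carrier_mat N N \<Longrightarrow> H1 \<in> carrier_mat N N \<Longrightarrow> interp H0 H1 1 = H1"
  unfolding interp_def by (intro eq_matI) auto

section \<open>Spectral theorem for Hermitian matrices\<close>

definition unitary :: "nat \<Rightarrow> complex mat \<Rightarrow> bool" where
  "unitary n U \<longleftrightarrow> U \<in> carrier_mat n n \<and> adjoint U * U = 1\<^sub>m n \<and> U * adjoint U = 1\<^sub>m n"

definition diag_real :: "nat \<Rightarrow> (nat \<Rightarrow> real) \<Rightarrow> complex mat" where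
  "diag_real n d = mat n n (\<lambda>(i,j). if i = j then complex_of_real (d i) else 0)"

lemma diag_real_carrier[simp]: "diag_real n d \<in> carrier_mat n n"
  by (simp add: diag_real_def)

lemma sum_delta_left:
  fixes n :: nat
  shows "i < n \<Longrightarrow> (\<Sum>l<n. (if i = l then 1 else 0) * f l) = (f i :: 'a :: semiring_1)"
proof -
  assume "i < n"
  have "(\<Sum>l<n. (if i = l then 1 else 0) * f l) = (\<Sum>l<n. if l = i then f l else 0)"
    by (rule sum.cong) auto
  also have "\<dots> = f i" using \<open>i < n\<close> by (subst sum.delta) auto
  finally show ?thesis .
qed

lemma sum_delta_right:
  fixes n :: nat
  shows "j < n \<Longrightarrow> (\<Sum>l<n. f l * (if l = j then 1 else 0)) = (f j :: 'a :: semiring_1)"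
proof -
  assume "j < n"
  have "(\<Sum>l<n. f l * (if l = j then 1 else 0)) = (\<Sum>l<n. if l = j then f l else 0)"
    by (rule sum.cong) auto
  also have "\<dots> = f j" using \<open>j < n\<close> by (subst sum.delta) auto
  finally show ?thesis .
qed

definition householder :: "nat \<Rightarrow> real \<Rightarrow> complex vec \<Rightarrow> complex mat" where
  "householder N t w = mat N N (\<lambda>(i,j). (if i = j then 1 else 0) - of_real t * w $ i * cnj (w $ j))"

lemma unitary_householder:
  assumes w: "w \<in> carrier_vec N" and t: "of_real t * (w \<bullet>c w) = 2"
  shows "unitary N (householder N t w)"
proof -
  define R where "R = householder N t w"
  define a where "a i j = of_real t * w $ i * cnj (w $ j)" for i j
  have R: "R \<in> carrier_mat N N" unfolding R_def householder_def by simp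
  have "adjoint R = R" by (rule eq_matI) (auto simp: R_def householder_def)
  moreover have "R * R = 1\<^sub>m N"
  proof (rule eq_matI)
    fix i j assume "i < dim_row (1\<^sub>m N)" "j < dim_col (1\<^sub>m N)"
    then have ij: "i < N" "j < N" by auto
    have "(R * R) $$ (i,j) =
        (\<Sum>l<N. ((if i = l then 1 else 0) - a i l) * ((if l = j then 1 else 0) - a l j))"
      using index_mult_mat_sum[OF R R ij] ij by (simp add: R_def householder_def a_def)
    also have "\<dots> = (\<Sum>l<N. (if i = l then 1 else 0) * (if l = j then 1 else 0))
        - (\<Sum>l<N. (if i = l then 1 else 0) * a l j)
        - (\<Sum>l<N. a i l * (if l = j then 1 else 0)) + (\<Sum>l<N. a i l * a l j)"
      by (simp add: algebra_simps sum.distrib sum_subtractf)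
    also have "(\<Sum>l<N. a i l * a l j) = a i j * (of_real t * (w \<bullet>c w))"
      unfolding a_def cscalar_prod_sum[OF w] by (simp add: sum_distrib_left algebra_simps)
    finally show "(R * R) $$ (i,j) = 1\<^sub>m N $$ (i,j)"
      using ij t by (simp add: sum_delta_left sum_delta_right)
  qed (use R in auto)
  ultimately show ?thesis using R unfolding R_def by (simp add: unitary_def)
qed

lemma unitary_with_first_column:
  assumes v: "v \<in> carrier_vec N" and N: "0 < N" and nv: "vnorm v = 1" and re: "Im (v $ 0) = 0"
  shows "\<exists>R. unitary N R \<and> col R 0 = v"
proof (cases "v = unit_vec N 0")
  case True
  then show ?thesis using N by (intro exI[of _ "1\<^sub>m N"]) (auto simp: unitary_def)
next
  case False
  \<comment> \<open>reflect along w = v - e_0, which swaps e_0 and v\<close>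
  define e where "e = (unit_vec N 0 :: complex vec)"
  have e: "e \<in> carrier_vec N" unfolding e_def by simp
  define w where "w = v - e"
  have w: "w \<in> carrier_vec N" unfolding w_def using v e by simp
  define r where "r = Re (v $ 0)"
  have v0: "v $ 0 = of_real r" using re by (simp add: r_def complex_eq_iff)
  have vv: "v \<bullet>c v = 1" using cscalar_prod_self[OF v] nv by simp
  have "v \<bullet>c e = (\<Sum>l<N. v $ l * (if l = 0 then 1 else 0))"
    unfolding cscalar_prod_sum[OF e] by (rule sum.cong) (auto simp: e_def)
  then have ve: "v \<bullet>c e = of_real r" using N v0 by (simp add: sum_delta_right)
  have ev: "e \<bullet>c v = of_real r" using cscalar_prod_swap[OF v e] ve by simp
  have ee: "e \<bullet>c e = 1" using N by (simp add: e_def)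
  have ww: "w \<bullet>c w = of_real (2 - 2 * r)"
    unfolding w_def using v e vv ve ev ee
    by (simp add: cscalar_prod_minus_left[of _ N] cscalar_prod_minus_right[of _ N])
  have "v = w + e" unfolding w_def using v e by (intro eq_vecI) auto
  then have "w \<noteq> 0\<^sub>v N" using False e by (auto simp: e_def)
  then have r1: "1 - r \<noteq> 0" using ww conjugate_square_eq_0_vec[OF w] by auto
  define t where "t = 1 / (1 - r)"
  have "t * (2 - 2 * r) = 2" unfolding t_def using r1 by (simp add: field_simps)
  then have t2: "of_real t * (w \<bullet>c w) = 2" unfolding ww of_real_mult[symmetric] by simp
  have tr: "t * (r - 1) = - 1" unfolding t_def using r1 by (simp add: field_simps)
  have w0: "cnj (w $ 0) = of_real (r - 1)" unfolding w_def using N v e v0 by (simp add: e_def)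
  have "householder N t w $$ (i,0) = v $ i" if i: "i < N" for i
  proof -
    have "householder N t w $$ (i,0) =
        (if i = 0 then 1 else 0) - of_real t * w $ i * of_real (r - 1)"
      using i N w0 by (simp add: householder_def)
    also have "of_real t * w $ i * of_real (r - 1) = of_real (t * (r - 1)) * w $ i"
      by (simp only: of_real_mult mult_ac)
    finally show ?thesis using i v e by (simp add: tr w_def e_def)
  qed
  then have "col (householder N t w) 0 = v" using v N
    by (intro eq_vecI) (auto simp: householder_def)
  then show ?thesis using unitary_householder[OF w t2] by blast
qed

lemma hermitian_unit_eigenvector:
  assumes h: "hermitian N A" and N: "0 < N"
  shows "\<exists>v e. v \<in> carrier_vec N \<and> vnorm v = 1 \<and> Im (v $ 0) = 0 \<and>
    A *\<^sub>v v = complex_of_real e \<cdot>\<^sub>v v"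
proof -
  have A: "A \<in> carrier_mat N N" using h by (simp add: hermitian_iff_adjoint)
  obtain as where cp: "char_poly A = (\<Prod>a\<leftarrow>as. [:- a, 1:])" and "length as = N"
    using char_poly_factorized[OF A] by blast
  then obtain e as' where "as = e # as'" using N by (cases as) auto
  then have "eigenvalue A e" using eigenvalue_root_char_poly[OF A] cp by simp
  then obtain u where "eigenvector A u e" unfolding eigenvalue_def by blast
  then have u: "u \<in> carrier_vec N" "u \<noteq> 0\<^sub>v N" and Au: "A *\<^sub>v u = e \<cdot>\<^sub>v u"
    unfolding eigenvector_def using A by auto
  have "e * of_real ((vnorm u)^2) = (A *\<^sub>v u) \<bullet>c u"
    using u Au by (simp add: cscalar_prod_self)
  also have "\<dots> = u \<bullet>c (A *\<^sub>v u)" by (rule hermitian_cscalar_prod[OF h u(1) u(1)])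
  also have "\<dots> = cnj e * of_real ((vnorm u)^2)"
    using u Au by (simp add: cscalar_prod_smult_right[of _ N] cscalar_prod_self)
  finally have "e = cnj e" using vnorm_pos[OF u] by simp
  then have e: "e = of_real (Re e)" by (metis Reals_cnj_iff complex_is_Real_iff of_real_Re)
  \<comment> \<open>rescale u by a unimodular phase so that its first entry becomes real\<close>
  define c where "c = u $ 0"
  define g where "g = (if c = 0 then 1 else cnj c / of_real (cmod c))"
  define v where "v = (g / of_real (vnorm u)) \<cdot>\<^sub>v u"
  have v: "v \<in> carrier_vec N" unfolding v_def using u by simp
  have "vnorm v = 1"
    unfolding v_def vnorm_smult[OF u(1)] g_def using vnorm_pos[OF u] by (auto simp: norm_divide)
  moreover have "Im (v $ 0) = 0"
  proof -
    have "v $ 0 = g * c / of_real (vnorm u)" unfolding v_def c_def using u N by simp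
    moreover have "g * c = of_real (cmod c)"
      unfolding g_def by (simp add: complex_norm_square[symmetric] power2_eq_square mult.commute)
    ultimately show ?thesis by simp
  qed
  moreover have "A *\<^sub>v v = e \<cdot>\<^sub>v v"
    unfolding v_def mult_mat_vec[OF A u(1)] Au smult_smult_assoc by (simp add: mult.commute)
  ultimately show ?thesis using v e by metis
qed

definition diag_block :: "complex \<Rightarrow> complex mat \<Rightarrow> complex mat" where
  "diag_block a X = mat (Suc (dim_row X)) (Suc (dim_col X)) (\<lambda>(i,j).
    if i = 0 then (if j = 0 then a else 0) else if j = 0 then 0 else X $$ (i - 1, j - 1))"

lemma diag_block_carrier[simp]:
  "X \<in> carrier_mat m k \<Longrightarrow> diag_block a X \<in> carrier_mat (Suc m) (Suc k)"
  by (auto simp: diag_block_def)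

lemma diag_block_index:
  "X \<in> carrier_mat m k \<Longrightarrow> i < Suc m \<Longrightarrow> j < Suc k \<Longrightarrow> diag_block a X $$ (i,j) =
    (if i = 0 then (if j = 0 then a else 0) else if j = 0 then 0 else X $$ (i - 1, j - 1))"
  by (auto simp: diag_block_def)

lemma diag_block_mult:
  assumes X: "X \<in> carrier_mat m k" and Y: "Y \<in> carrier_mat k n"
  shows "diag_block a X * diag_block b Y = diag_block (a * b) (X * Y)"
proof (rule eq_matI)
  fix i j
  assume "i < dim_row (diag_block (a * b) (X * Y))" "j < dim_col (diag_block (a * b) (X * Y))"
  then have ij: "i < Suc m" "j < Suc n" using X Y by (auto simp: diag_block_def)
  have "(diag_block a X * diag_block b Y) $$ (i,j) =
      (\<Sum>l<Suc k. diag_block a X $$ (i,l) * diag_block b Y $$ (l,j))"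
    by (rule index_mult_mat_sum[OF diag_block_carrier[OF X] diag_block_carrier[OF Y] ij])
  also have "\<dots> = diag_block a X $$ (i,0) * diag_block b Y $$ (0,j) +
      (\<Sum>l<k. diag_block a X $$ (i, Suc l) * diag_block b Y $$ (Suc l, j))"
    by (rule sum.lessThan_Suc_shift)
  also have "\<dots> = diag_block (a * b) (X * Y) $$ (i,j)"
    using ij X Y
    by (cases i; cases j)
      (simp_all add: diag_block_index diag_block_index[OF mult_carrier_mat[OF X Y]]
        index_mult_mat_sum[OF X Y] del: index_mult_mat(1))
  finally show "(diag_block a X * diag_block b Y) $$ (i,j) = diag_block (a * b) (X * Y) $$ (i,j)" .
qed (use X Y in \<open>auto simp: diag_block_def\<close>)

lemma adjoint_diag_block: "adjoint (diag_block a X) = diag_block (cnj a) (adjoint X)"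
  by (rule eq_matI) (auto simp: diag_block_def adjoint_def)

lemma diag_block_one: "diag_block 1 (1\<^sub>m m) = 1\<^sub>m (Suc m)"
  by (rule eq_matI) (auto simp: diag_block_def)

lemma diag_block_diag_real:
  "diag_block (of_real r) (diag_real m d) = diag_real (Suc m) (\<lambda>i. if i = 0 then r else d (i - 1))"
  by (rule eq_matI) (auto simp: diag_block_def diag_real_def)

lemma unitary_mult:
  assumes U: "unitary n U" and V: "unitary n V"
  shows "unitary n (U * V)"
proof -
  have c: "U \<in> carrier_mat n n" "V \<in> carrier_mat n n" "adjoint U \<in> carrier_mat n n"
    "adjoint V \<in> carrier_mat n n"
    using U V by (auto simp: unitary_def)
  have "adjoint (U * V) * (U * V) = adjoint V * (adjoint U * U) * V"
    "(U * V) * adjoint (U * V) = U * (V * adjoint V) * adjoint U"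
    using c by (simp_all add: adjoint_mult[of _ n n] assoc_mult_mat[of _ n n _ n _ n]
        mult_carrier_mat[of _ n n _ n])
  then show ?thesis using U V c by (simp add: unitary_def)
qed

lemma unitary_diag_block: "unitary m U \<Longrightarrow> unitary (Suc m) (diag_block 1 U)"
  unfolding unitary_def
  by (auto simp: adjoint_diag_block diag_block_mult[of _ m m _ m] diag_block_one)

lemma unitary_conjugate_cancel:
  assumes U: "unitary n U" and A: "A \<in> carrier_mat n n" and D: "adjoint U * A * U = D"
  shows "A = U * D * adjoint U"
proof -
  have Uc: "U \<in> carrier_mat n n" and aUc: "adjoint U \<in> carrier_mat n n"
    and UU: "U * adjoint U = 1\<^sub>m n" using U by (auto simp: unitary_def)
  have "A = (U * adjoint U) * A * (U * adjoint U)" unfolding UU using A by simp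
  also have "\<dots> = U * (adjoint U * A * U) * adjoint U"
    using Uc aUc A by (simp add: assoc_mult_mat[of _ n n _ n _ n] mult_carrier_mat[of _ n n _ n])
  finally show ?thesis unfolding D .
qed

lemma hermitian_deflation:
  assumes h: "hermitian (Suc m) A"
  shows "\<exists>R e A'. unitary (Suc m) R \<and> hermitian m A' \<and>
    adjoint R * A * R = diag_block (of_real e) A'"
proof -
  define N where "N = Suc m"
  have A: "A \<in> carrier_mat N N" and adjA: "adjoint A = A"
    using h by (simp_all add: hermitian_iff_adjoint N_def)
  obtain v e where v: "v \<in> carrier_vec N" "vnorm v = 1" "Im (v $ 0) = 0"
    and Av: "A *\<^sub>v v = complex_of_real e \<cdot>\<^sub>v v"
    using hermitian_unit_eigenvector[OF h] unfolding N_def by auto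
  obtain R where R: "unitary N R" and Rv: "col R 0 = v"
    using unitary_with_first_column[OF v(1) _ v(2,3)] unfolding N_def by auto
  have Rc: "R \<in> carrier_mat N N" and aRc: "adjoint R \<in> carrier_mat N N"
    and RR: "adjoint R * R = 1\<^sub>m N" using R by (auto simp: unitary_def)
  define B where "B = adjoint R * A * R"
  have Bc: "B \<in> carrier_mat N N" unfolding B_def using Rc aRc A
    by (simp add: mult_carrier_mat[of _ N N _ N])
  have "adjoint B = adjoint R * adjoint (adjoint R * A)"
    unfolding B_def by (rule adjoint_mult[OF mult_carrier_mat[OF aRc A] Rc])
  also have "adjoint (adjoint R * A) = A * R" using adjoint_mult[OF aRc A] adjA by simp
  finally have adjB: "adjoint B = B"
    unfolding B_def using aRc A Rc by (simp add: assoc_mult_mat[of _ N N _ N _ N])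
  have col0: "B $$ (i,0) = (if i = 0 then of_real e else 0)" if i: "i < N" for i
  proof -
    have N0: "0 < N" unfolding N_def by simp
    have "col B 0 = (adjoint R * A) *\<^sub>v v"
      unfolding B_def Rv[symmetric] by (rule col_mult2[OF mult_carrier_mat[OF aRc A] Rc N0])
    also have "\<dots> = of_real e \<cdot>\<^sub>v (adjoint R *\<^sub>v col R 0)"
      using aRc A v by (simp add: assoc_mult_mat_vec[of _ N N _ N] Av mult_mat_vec Rv)
    also have "adjoint R *\<^sub>v col R 0 = col (adjoint R * R) 0"
      by (rule col_mult2[OF aRc Rc N0, symmetric])
    finally have "col B 0 $ i = (of_real e \<cdot>\<^sub>v unit_vec N 0) $ i" using RR N0 by simp
    then show ?thesis using i Bc N0 by auto
  qed
  have row0: "B $$ (0,j) = (if j = 0 then of_real e else 0)" if j: "j < N" for j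
    using col0[OF j] adjoint_index[of 0 B j] adjB Bc j unfolding N_def by auto
  define A' where "A' = mat m m (\<lambda>(i,j). B $$ (Suc i, Suc j))"
  have "B = diag_block (of_real e) A'"
    using Bc row0 col0 unfolding N_def A'_def
    by (intro eq_matI) (auto simp: diag_block_def)
  moreover have "hermitian m A'"
    using adjB Bc unfolding hermitian_iff_adjoint A'_def N_def
    by (auto intro!: eq_matI) (metis Suc_less_eq adjoint_index carrier_matD)
  ultimately show ?thesis using R unfolding B_def N_def by blast
qed

theorem hermitian_spectral_decomposition:
  "hermitian N A \<Longrightarrow> \<exists>U d. unitary N U \<and> A = U * diag_real N d * adjoint U"
proof (induction N arbitrary: A)
  case 0
  then show ?case
    by (intro exI[of _ "1\<^sub>m 0"]) (auto simp: unitary_def hermitian_iff_adjoint intro!: eq_matI)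
next
  case (Suc m)
  obtain R e A' where R: "unitary (Suc m) R" and h': "hermitian m A'"
    and RAR: "adjoint R * A * R = diag_block (of_real e) A'"
    using hermitian_deflation[OF Suc.prems] by blast
  obtain U' d' where U': "unitary m U'" and A': "A' = U' * diag_real m d' * adjoint U'"
    using Suc.IH[OF h'] by blast
  have U'c: "U' \<in> carrier_mat m m" and UU': "adjoint U' * U' = 1\<^sub>m m"
    using U' by (auto simp: unitary_def)
  have A'c: "A' \<in> carrier_mat m m" using h' by (simp add: hermitian_iff_adjoint)
  have Rc: "R \<in> carrier_mat (Suc m) (Suc m)" using R by (simp add: unitary_def)
  have A: "A \<in> carrier_mat (Suc m) (Suc m)" using Suc.prems by (simp add: hermitian_iff_adjoint)
  define E where "E = diag_block 1 U'"
  have Ec: "E \<in> carrier_mat (Suc m) (Suc m)" unfolding E_def using U'c by simp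
  define d where "d i = (if i = 0 then e else d' (i - 1))" for i
  have "adjoint U' * A' * U' = (adjoint U' * U') * diag_real m d' * (adjoint U' * U')"
    unfolding A' using U'c
      by (simp add: assoc_mult_mat[of _ m m _ m _ m] mult_carrier_mat[of _ m m _ m])
  then have "adjoint U' * A' * U' = diag_real m d'"
    unfolding UU' by (simp add: left_mult_one_mat[of _ m m] right_mult_one_mat[of _ m m])
  then have "adjoint E * (adjoint R * A * R) * E = diag_real (Suc m) d"
    unfolding RAR E_def d_def adjoint_diag_block using U'c A'c
    by (simp add: diag_block_mult[of _ m m _ m] mult_carrier_mat[of _ m m _ m] diag_block_diag_real)
  then have "adjoint (R * E) * A * (R * E) = diag_real (Suc m) d"
    using Rc Ec A
    by (simp add: adjoint_mult[of _ "Suc m" "Suc m"]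
        assoc_mult_mat[of _ "Suc m" "Suc m" _ "Suc m" _ "Suc m"]
        mult_carrier_mat[of _ "Suc m" "Suc m" _ "Suc m"])
  moreover have "unitary (Suc m) (R * E)"
    unfolding E_def by (rule unitary_mult[OF R unitary_diag_block[OF U']])
  ultimately show ?case using unitary_conjugate_cancel[OF _ A] by blast
qed

section \<open>The two lowest eigenvalues as minima of the quadratic form\<close>

lemma prod_linear_nonzero: "(\<Prod>a\<leftarrow>as. [:- a, 1:]) \<noteq> (0 :: complex poly)"
proof (induction as)
  case (Cons a as)
  have "[:- a, 1:] * (\<Prod>a\<leftarrow>as. [:- a, 1:]) \<noteq> (0 :: complex poly)"
    by (rule no_zero_divisors[OF _ Cons.IH]) simp
  then show ?case by simp
qed simp

lemma order_prod_linear: "order x (\<Prod>a\<leftarrow>as. [:- a, 1:]) = count_list as (x :: complex)"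
proof (induction as)
  case Nil
  show ?case by (simp add: order_0I)
next
  case (Cons a as)
  have "order x (\<Prod>a\<leftarrow>a # as. [:- a, 1:]) = order x ([:- a, 1:] * (\<Prod>a\<leftarrow>as. [:- a, 1:]))"
    by simp
  also have "\<dots> = order x [:- a, 1:] + order x (\<Prod>a\<leftarrow>as. [:- a, 1:])"
    by (rule order_mult, rule no_zero_divisors[OF _ prod_linear_nonzero]) simp
  also have "order x [:- a, 1:] = (if a = x then 1 else 0)"
    using order_power_n_n[of a 1] by (auto simp: order_0I)
  finally show ?case using Cons by simp
qed

lemma poly_prod_linear_eq_0_iff: "poly (\<Prod>a\<leftarrow>as. [:- a, 1:]) x = 0 \<longleftrightarrow> (x :: complex) \<in> set as"
  by (induction as) auto

lemma sum_count_list: "finite S \<Longrightarrow> (\<Sum>e\<in>S. count_list as e) = length (filter (\<lambda>a. a \<in> S) as)"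
proof (induction as)
  case (Cons a as)
  have "(\<Sum>e\<in>S. count_list (a # as) e) = (\<Sum>e\<in>S. count_list as e) + (\<Sum>e\<in>S. if a = e then 1 else 0)"
    by (auto simp: sum.distrib[symmetric] intro!: sum.cong)
  also have "(\<Sum>e\<in>S. if a = e then 1 else 0) = (if a \<in> S then 1 else (0::nat))"
    using Cons.prems by (simp add: sum.delta)
  finally show ?case using Cons by simp
qed simp

lemma eig_count_real_spectrum:
  assumes cp: "char_poly H = (\<Prod>a\<leftarrow>map (\<lambda>i. complex_of_real (d i)) [0..<N]. [:- a, 1:])"
  shows "eig_count H x = card {i. i < N \<and> d i \<le> x}"
proof -
  define as where "as = map (\<lambda>i. complex_of_real (d i)) [0..<N]"
  define S where "S = {e. poly (char_poly H) e = 0 \<and> Re e \<le> x}"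
  have S: "S = {e \<in> set as. Re e \<le> x}"
    unfolding S_def cp as_def[symmetric] poly_prod_linear_eq_0_iff by auto
  have "eig_count H x = (\<Sum>e\<in>S. count_list as e)"
    unfolding eig_count_def S_def[symmetric] unfolding cp as_def[symmetric] order_prod_linear ..
  also have "\<dots> = length (filter (\<lambda>a. a \<in> S) as)" by (rule sum_count_list) (simp add: S)
  also have "filter (\<lambda>a. a \<in> S) as = filter (\<lambda>a. Re a \<le> x) as" unfolding S
    by (rule filter_cong) auto
  also have "length \<dots> = length (filter (\<lambda>i. d i \<le> x) [0..<N])"
    unfolding as_def filter_map by (simp add: o_def)
  also have "\<dots> = card {i. i < N \<and> d i \<le> x}"
    unfolding length_filter_conv_card
    by (intro arg_cong[where f=card] Collect_cong) auto
  finally show ?thesis .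
qed

lemma lam_real_spectrum:
  fixes i0 N :: nat
  assumes count: "\<And>x. eig_count H x = card {i. i < N \<and> d i \<le> x}"
    and i0: "i0 < N" and min: "\<And>i. i < N \<Longrightarrow> d i0 \<le> d i"
  shows "lam H 0 = d i0" and "\<And>j. j < N \<Longrightarrow> j \<noteq> i0 \<Longrightarrow> lam H 1 \<le> d j"
    and "2 \<le> N \<Longrightarrow> lam H 0 \<le> lam H 1"
proof -
  have fin: "finite {i. i < N \<and> d i \<le> x}" for x by (rule finite_subset[of _ "{..<N}"]) auto
  have pos: "0 < eig_count H x \<longleftrightarrow> d i0 \<le> x" for x
    unfolding count using fin i0 min by (auto simp: card_gt_0_iff intro: order_trans)
  then have "{x. 0 < eig_count H x} = {d i0..}" by auto
  then show lam0: "lam H 0 = d i0" unfolding lam_def by simp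
  have lower: "d i0 \<le> x" if "1 < eig_count H x" for x using that pos[of x] by auto
  have mem: "1 < eig_count H (d j)" if "j < N" "j \<noteq> i0" for j
  proof -
    have "card {i0, j} \<le> card {i. i < N \<and> d i \<le> d j}"
      using that i0 min by (intro card_mono[OF fin]) auto
    then show ?thesis unfolding count using that by simp
  qed
  have bdd: "bdd_below {x. 1 < eig_count H x}" using lower by (intro bdd_belowI) auto
  show "\<And>j. j < N \<Longrightarrow> j \<noteq> i0 \<Longrightarrow> lam H 1 \<le> d j"
    unfolding lam_def using mem bdd by (intro cInf_lower) auto
  assume "2 \<le> N"
  define j :: nat where "j = (if i0 = 0 then 1 else 0)"
  have "j < N" "j \<noteq> i0" unfolding j_def using \<open>2 \<le> N\<close> by auto
  then have "d i0 \<le> lam H 1" unfolding lam_def using mem lower by (intro cInf_greatest) auto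
  then show "lam H 0 \<le> lam H 1" using lam0 by simp
qed

lemma index_diag_real_mult_vec:
  assumes y: "y \<in> carrier_vec N" and i: "i < N"
  shows "(diag_real N d *\<^sub>v y) $ i = of_real (d i) * y $ i"
proof -
  have "(diag_real N d *\<^sub>v y) $ i = (\<Sum>l<N. diag_real N d $$ (i,l) * y $ l)"
    by (rule index_mult_mat_vec_sum[OF diag_real_carrier y i])
  also have "\<dots> = (\<Sum>l<N. (if i = l then 1 else 0) * (of_real (d i) * y $ l))"
    by (rule sum.cong) (use i in \<open>auto simp: diag_real_def\<close>)
  finally show ?thesis using i by (simp add: sum_delta_left)
qed

lemma vnorm_unitary:
  assumes U: "unitary N U" and x: "x \<in> carrier_vec N"
  shows "vnorm (adjoint U *\<^sub>v x) = vnorm x"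
proof -
  have Uc: "U \<in> carrier_mat N N" and UU: "U * adjoint U = 1\<^sub>m N" using U by (auto simp: unitary_def)
  have Ux: "adjoint U *\<^sub>v x \<in> carrier_vec N"
    by (rule mult_mat_vec_carrier[OF adjoint_carrier[OF Uc] x])
  have "(adjoint U *\<^sub>v x) \<bullet>c (adjoint U *\<^sub>v x) = x \<bullet>c (U *\<^sub>v (adjoint U *\<^sub>v x))"
    using cscalar_prod_adjoint[OF adjoint_carrier[OF Uc] x Ux] by simp
  also have "U *\<^sub>v (adjoint U *\<^sub>v x) = x"
    using Uc x UU by (simp flip: assoc_mult_mat_vec[of _ N N _ N])
  finally show ?thesis by (simp add: vnorm_def)
qed

lemma qform_unitary_diag:
  assumes U: "unitary N U" and x: "x \<in> carrier_vec N"
  shows "qform (U * diag_real N d * adjoint U) x = (\<Sum>i<N. d i * (cmod ((adjoint U *\<^sub>v x) $ i))^2)"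
proof -
  have Uc: "U \<in> carrier_mat N N" using U by (simp add: unitary_def)
  define y where "y = adjoint U *\<^sub>v x"
  have y: "y \<in> carrier_vec N" unfolding y_def
    by (rule mult_mat_vec_carrier[OF adjoint_carrier[OF Uc] x])
  have "(U * diag_real N d * adjoint U) *\<^sub>v x = (U * diag_real N d) *\<^sub>v y"
    unfolding y_def
    by (rule assoc_mult_mat_vec[OF mult_carrier_mat[OF Uc diag_real_carrier]
          adjoint_carrier[OF Uc] x])
  also have "\<dots> = U *\<^sub>v (diag_real N d *\<^sub>v y)"
    by (rule assoc_mult_mat_vec[OF Uc diag_real_carrier y])
  finally have "(U * diag_real N d * adjoint U) *\<^sub>v x = U *\<^sub>v (diag_real N d *\<^sub>v y)" .
  moreover have "(U *\<^sub>v (diag_real N d *\<^sub>v y)) \<bullet>c x = (diag_real N d *\<^sub>v y) \<bullet>c y"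
    unfolding y_def
    by (rule cscalar_prod_adjoint[OF Uc
          mult_mat_vec_carrier[OF diag_real_carrier y[unfolded y_def]] x])
  ultimately have "qform (U * diag_real N d * adjoint U) x = Re ((diag_real N d *\<^sub>v y) \<bullet>c y)"
    unfolding qform_def by simp
  also have "(diag_real N d *\<^sub>v y) \<bullet>c y = (\<Sum>i<N. of_real (d i * (cmod (y $ i))^2))"
    unfolding cscalar_prod_sum[OF y]
  proof (rule sum.cong)
    fix i assume "i \<in> {..<N}"
    then have "(diag_real N d *\<^sub>v y) $ i * cnj (y $ i) = of_real (d i) * (y $ i * cnj (y $ i))"
      using y by (simp add: index_diag_real_mult_vec)
    also have "y $ i * cnj (y $ i) = of_real ((cmod (y $ i))^2)"
      by (rule complex_norm_square[symmetric])
    finally show "(diag_real N d *\<^sub>v y) $ i * cnj (y $ i) = of_real (d i * (cmod (y $ i))^2)" by simp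
  qed simp
  finally show ?thesis unfolding y_def by (simp flip: of_real_sum)
qed

lemma hermitian_diagonalization_min:
  assumes h: "hermitian N H" and N: "0 < N"
  obtains U d i0 where "unitary N U" "H = U * diag_real N d * adjoint U" "i0 < N"
    "\<And>i. i < N \<Longrightarrow> d i0 \<le> d i" "lam H 0 = d i0" "\<And>j. j < N \<Longrightarrow> j \<noteq> i0 \<Longrightarrow> lam H 1 \<le> d j"
    "2 \<le> N \<Longrightarrow> lam H 0 \<le> lam H 1"
proof -
  obtain U d where U: "unitary N U" and H: "H = U * diag_real N d * adjoint U"
    using hermitian_spectral_decomposition[OF h] by blast
  have Uc: "U \<in> carrier_mat N N" and UU: "adjoint U * U = 1\<^sub>m N" and UU': "U * adjoint U = 1\<^sub>m N"
    using U by (auto simp: unitary_def)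
  have "similar_mat_wit H (diag_real N d) U (adjoint U)"
    using h by (intro similar_mat_witI[OF UU' UU H _ diag_real_carrier Uc adjoint_carrier[OF Uc]])
      (simp add: hermitian_iff_adjoint)
  then have "similar_mat H (diag_real N d)" unfolding similar_mat_def by blast
  then have "char_poly H = char_poly (diag_real N d)" by (rule char_poly_similar)
  also have "\<dots> = (\<Prod>a\<leftarrow>map (\<lambda>i. complex_of_real (d i)) [0..<N]. [:- a, 1:])"
  proof -
    have "upper_triangular (diag_real N d)" by (simp add: upper_triangular_def diag_real_def)
    moreover have "diag_mat (diag_real N d) = map (\<lambda>i. complex_of_real (d i)) [0..<N]"
      by (auto simp: diag_mat_def diag_real_def)
    ultimately show ?thesis using char_poly_upper_triangular[OF diag_real_carrier] by metis
  qed
  finally have count: "eig_count H x = card {i. i < N \<and> d i \<le> x}" for x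
    by (rule eig_count_real_spectrum)
  have "Min (d ` {..<N}) \<in> d ` {..<N}" by (rule Min_in) (use N in auto)
  then obtain i0 where i0: "i0 < N" "d i0 = Min (d ` {..<N})" by auto
  then have min: "d i0 \<le> d i" if "i < N" for i using that by simp
  show thesis using that[OF U H i0(1) min lam_real_spectrum[OF count i0(1) min]] by blast
qed

lemma lam0_le_qform:
  assumes h: "hermitian N H" and N: "0 < N" and x: "x \<in> carrier_vec N"
  shows "lam H 0 * (vnorm x)^2 \<le> qform H x"
proof -
  obtain U d i0 where U: "unitary N U" and H: "H = U * diag_real N d * adjoint U"
    and min: "\<And>i. i < N \<Longrightarrow> d i0 \<le> d i" and lam0: "lam H 0 = d i0"
    by (rule hermitian_diagonalization_min[OF h N]) blast
  have Uc: "U \<in> carrier_mat N N" using U by (simp add: unitary_def)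
  have Ux: "adjoint U *\<^sub>v x \<in> carrier_vec N"
    by (rule mult_mat_vec_carrier[OF adjoint_carrier[OF Uc] x])
  have "lam H 0 * (vnorm x)^2 = (\<Sum>i<N. d i0 * (cmod ((adjoint U *\<^sub>v x) $ i))^2)"
    unfolding lam0 vnorm_unitary[OF U x, symmetric] vnorm_square_sum[OF Ux]
      by (simp add: sum_distrib_left)
  also have "\<dots> \<le> qform H x"
    unfolding H qform_unitary_diag[OF U x] using min by (intro sum_mono mult_right_mono) auto
  finally show ?thesis .
qed

lemma lam0_le_lam1:
  assumes h: "hermitian N H" and N2: "2 \<le> N"
  shows "lam H 0 \<le> lam H 1"
proof (rule hermitian_diagonalization_min[OF h])
  show "0 < N" using N2 by simp
qed (use N2 in blast)

lemma unitary_col: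
  assumes U: "unitary N U" and i: "i < N"
  shows "col U i \<in> carrier_vec N" and "adjoint U *\<^sub>v col U i = unit_vec N i"
    and "\<And>z. z \<in> carrier_vec N \<Longrightarrow> (adjoint U *\<^sub>v z) $ i = z \<bullet>c col U i"
proof -
  have Uc: "U \<in> carrier_mat N N" and aUc: "adjoint U \<in> carrier_mat N N"
    and UU: "adjoint U * U = 1\<^sub>m N" using U by (auto simp: unitary_def)
  show g: "col U i \<in> carrier_vec N" by (rule col_carrier_vec[OF i Uc])
  show "adjoint U *\<^sub>v col U i = unit_vec N i"
    unfolding col_mult2[OF aUc Uc i, symmetric] UU using i by (rule col_one)
  fix z :: "complex vec" assume z: "z \<in> carrier_vec N"
  have "(adjoint U *\<^sub>v z) $ i = (\<Sum>l<N. adjoint U $$ (i,l) * z $ l)"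
    by (rule index_mult_mat_vec_sum[OF aUc z i])
  also have "\<dots> = (\<Sum>l<N. z $ l * cnj (col U i $ l))"
    by (rule sum.cong) (use Uc i in auto)
  also have "\<dots> = z \<bullet>c col U i" by (rule cscalar_prod_sum[OF g, symmetric])
  finally show "(adjoint U *\<^sub>v z) $ i = z \<bullet>c col U i" .
qed

lemma ground_vector_exists:
  assumes h: "hermitian N H" and N: "0 < N"
  shows "\<exists>g\<in>carrier_vec N. vnorm g = 1 \<and> qform H g = lam H 0 \<and>
    (\<forall>z\<in>carrier_vec N. z \<bullet>c g = 0 \<longrightarrow> lam H 1 * (vnorm z)^2 \<le> qform H z)"
proof -
  obtain U d i0 where U: "unitary N U" and H: "H = U * diag_real N d * adjoint U" and i0: "i0 < N"
    and lam0: "lam H 0 = d i0" and lam1: "\<And>j. j < N \<Longrightarrow> j \<noteq> i0 \<Longrightarrow> lam H 1 \<le> d j"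
    by (rule hermitian_diagonalization_min[OF h N]) blast
  have aUc: "adjoint U \<in> carrier_mat N N" using U by (simp add: unitary_def)
  define g where "g = col U i0"
  note g = unitary_col(1)[OF U i0, folded g_def] and Ug = unitary_col(2)[OF U i0, folded g_def]
    and coord = unitary_col(3)[OF U i0, folded g_def]
  have unit: "(cmod (unit_vec N i0 $ i))^2 = (if i = i0 then 1 else 0)" if "i < N" for i
    using that i0 by simp
  have "(vnorm g)^2 = (\<Sum>i<N. if i = i0 then 1 else 0)"
    unfolding vnorm_unitary[OF U g, symmetric] Ug vnorm_square_sum[OF unit_vec_carrier]
    using unit by (intro sum.cong) auto
  then have "vnorm g = 1" using i0 vnorm_nonneg[of g] by (simp add: power2_eq_1_iff)
  moreover have "qform H g = (\<Sum>i<N. if i = i0 then d i else 0)"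
    unfolding H qform_unitary_diag[OF U g] Ug using unit by (intro sum.cong) auto
  then have "qform H g = lam H 0" using i0 lam0 by simp
  moreover have "lam H 1 * (vnorm z)^2 \<le> qform H z" if z: "z \<in> carrier_vec N" "z \<bullet>c g = 0" for z
  proof -
    have "lam H 1 * (vnorm z)^2 = (\<Sum>i<N. lam H 1 * (cmod ((adjoint U *\<^sub>v z) $ i))^2)"
      unfolding vnorm_unitary[OF U z(1), symmetric]
        vnorm_square_sum[OF mult_mat_vec_carrier[OF aUc z(1)]]
      by (simp add: sum_distrib_left)
    also have "\<dots> \<le> (\<Sum>i<N. d i * (cmod ((adjoint U *\<^sub>v z) $ i))^2)"
    proof (rule sum_mono)
      fix i assume i: "i \<in> {..<N}"
      show "lam H 1 * (cmod ((adjoint U *\<^sub>v z) $ i))^2 \<le> d i * (cmod ((adjoint U *\<^sub>v z) $ i))^2"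
      proof (cases "i = i0")
        case True
        then show ?thesis using coord[OF z(1)] z(2) by simp
      next
        case False
        then show ?thesis using lam1 i by (intro mult_right_mono) auto
      qed
    qed
    also have "\<dots> = qform H z" unfolding H qform_unitary_diag[OF U z(1)] ..
    finally show ?thesis .
  qed
  ultimately show ?thesis using g by blast
qed

section \<open>Subspaces and orthogonal projections\<close>

definition csubspace :: "nat \<Rightarrow> complex vec set \<Rightarrow> bool" where
  "csubspace N V \<longleftrightarrow> V \<subseteq> carrier_vec N \<and> 0\<^sub>v N \<in> V \<and> (\<forall>x\<in>V. \<forall>y\<in>V. x + y \<in> V) \<and>
    (\<forall>a. \<forall>x\<in>V. a \<cdot>\<^sub>v x \<in> V)"

lemma csubspace_carrier: "csubspace N V \<Longrightarrow> x \<in> V \<Longrightarrow> x \<in> carrier_vec N"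
  unfolding csubspace_def by blast

lemma csubspace_smult: "csubspace N V \<Longrightarrow> x \<in> V \<Longrightarrow> a \<cdot>\<^sub>v x \<in> V"
  unfolding csubspace_def by blast

lemma csubspace_add: "csubspace N V \<Longrightarrow> x \<in> V \<Longrightarrow> y \<in> V \<Longrightarrow> x + y \<in> V"
  unfolding csubspace_def by blast

lemma csubspace_minus: "csubspace N V \<Longrightarrow> x \<in> V \<Longrightarrow> y \<in> V \<Longrightarrow> x - y \<in> V"
proof -
  assume V: "csubspace N V" and x: "x \<in> V" and y: "y \<in> V"
  have "x - y = x + (-1) \<cdot>\<^sub>v y"
    using csubspace_carrier[OF V x] csubspace_carrier[OF V y] by (intro eq_vecI) auto
  then show ?thesis using V x y by (simp add: csubspace_add csubspace_smult)
qed

lemma lincomb_Nil[simp]: "lincomb N [] ws = 0\<^sub>v N" "lincomb N cs [] = 0\<^sub>v N"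
  by (auto simp: lincomb_def)

lemma lincomb_Cons[simp]: "lincomb N (c # cs) (w # ws) = c \<cdot>\<^sub>v w + lincomb N cs ws"
  by (simp add: lincomb_def)

lemma lincomb_carrier: "set ws \<subseteq> carrier_vec N \<Longrightarrow> lincomb N cs ws \<in> carrier_vec N"
proof (induction ws arbitrary: cs)
  case (Cons w ws cs)
  then show ?case by (cases cs) auto
qed simp

lemma lincomb_mem: "csubspace N V \<Longrightarrow> set ws \<subseteq> V \<Longrightarrow> lincomb N cs ws \<in> V"
proof (induction ws arbitrary: cs)
  case Nil
  then show ?case by (simp add: csubspace_def)
next
  case (Cons w ws cs)
  then show ?case
    by (cases cs) (auto simp: csubspace_def)
qed

lemma lincomb_append:
  assumes "set ws1 \<subseteq> carrier_vec N" "set ws2 \<subseteq> carrier_vec N" "length cs1 = length ws1"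
  shows "lincomb N cs1 ws1 + lincomb N cs2 ws2 = lincomb N (cs1 @ cs2) (ws1 @ ws2)"
  using assms
proof (induction ws1 arbitrary: cs1)
  case Nil
  then show ?case using lincomb_carrier[OF Nil(2)] by simp
next
  case (Cons w ws cs1)
  then obtain c cs where cs1: "cs1 = c # cs" by (cases cs1) auto
  have w: "w \<in> carrier_vec N" and ws: "set ws \<subseteq> carrier_vec N" using Cons by auto
  have "lincomb N cs1 (w # ws) + lincomb N cs2 ws2 = c \<cdot>\<^sub>v w + (lincomb N cs ws + lincomb N cs2 ws2)"
    unfolding cs1 using w lincomb_carrier[OF ws] lincomb_carrier[OF Cons(3)] by simp
  also have "lincomb N cs ws + lincomb N cs2 ws2 = lincomb N (cs @ cs2) (ws @ ws2)"
    using Cons cs1 ws by simp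
  finally show ?case unfolding cs1 by simp
qed

lemma smult_lincomb:
  "set ws \<subseteq> carrier_vec N \<Longrightarrow> a \<cdot>\<^sub>v lincomb N cs ws = lincomb N (map ((*) a) cs) ws"
proof (induction ws arbitrary: cs)
  case (Cons w ws cs)
  then show ?case
    by (cases cs) (auto simp: smult_add_distrib_vec[of _ N] lincomb_carrier smult_smult_assoc)
qed simp

lemma lincomb_cscalar_prod:
  "set us \<subseteq> carrier_vec N \<Longrightarrow> length cs = length us \<Longrightarrow> z \<in> carrier_vec N \<Longrightarrow>
    lincomb N cs us \<bullet>c z = (\<Sum>i<length us. cs ! i * (us ! i \<bullet>c z))"
proof (induction us arbitrary: cs)
  case (Cons u us cs)
  then obtain c cs' where cs: "cs = c # cs'" by (cases cs) auto
  then show ?case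
    using Cons lincomb_carrier[of us N cs']
    by (simp add: cscalar_prod_add_left[of _ N] sum.lessThan_Suc_shift del: sum.lessThan_Suc)
qed simp

lemma cspan_csubspace:
  assumes S: "S \<subseteq> carrier_vec N"
  shows "csubspace N (cspan N S)"
  unfolding csubspace_def
proof (intro conjI ballI allI)
  show "cspan N S \<subseteq> carrier_vec N" unfolding cspan_def using lincomb_carrier S by blast
  show "0\<^sub>v N \<in> cspan N S" unfolding cspan_def by (auto intro!: exI[of _ "[]"])
next
  fix x y assume "x \<in> cspan N S" "y \<in> cspan N S"
  then obtain cs1 ws1 cs2 ws2
    where x: "x = lincomb N cs1 ws1" "set ws1 \<subseteq> S" "length cs1 = length ws1"
    and y: "y = lincomb N cs2 ws2" "set ws2 \<subseteq> S" "length cs2 = length ws2"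
    unfolding cspan_def by blast
  have "x + y = lincomb N (cs1 @ cs2) (ws1 @ ws2)"
    unfolding x y using S x y by (intro lincomb_append) auto
  then show "x + y \<in> cspan N S"
    unfolding cspan_def using x y by (auto intro!: exI[of _ "cs1 @ cs2"] exI[of _ "ws1 @ ws2"])
next
  fix a x assume "x \<in> cspan N S"
  then obtain cs ws where x: "x = lincomb N cs ws" "set ws \<subseteq> S" "length cs = length ws"
    unfolding cspan_def by blast
  have "a \<cdot>\<^sub>v x = lincomb N (map ((*) a) cs) ws"
    unfolding x using S x by (intro smult_lincomb) auto
  then show "a \<cdot>\<^sub>v x \<in> cspan N S"
    unfolding cspan_def using x by (auto intro!: exI[of _ "map ((*) a) cs"] exI[of _ ws])
qed

lemma cspan_eigenvectors_invariant:
  assumes S: "S \<subseteq> carrier_vec N" and H: "H \<in> carrier_mat N N"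
    and ev: "\<forall>v\<in>S. \<exists>e. eigenvector H v e" and x: "x \<in> cspan N S"
  shows "H *\<^sub>v x \<in> cspan N S"
proof -
  have V: "csubspace N (cspan N S)" by (rule cspan_csubspace[OF S])
  have S_cspan: "w \<in> cspan N S" if "w \<in> S" for w
    using that S unfolding cspan_def by (auto intro!: exI[of _ "[1]"] exI[of _ "[w]"])
  obtain cs ws where x: "x = lincomb N cs ws" and ws: "set ws \<subseteq> S"
    using x unfolding cspan_def by blast
  show ?thesis
    unfolding x using ws
  proof (induction ws arbitrary: cs)
    case Nil
    then show ?case using H V by (simp add: csubspace_def)
  next
    case (Cons w ws cs)
    show ?case
    proof (cases cs)
      case Nil
      then show ?thesis using H V by (simp add: csubspace_def)
    next
      case (Cons c cs')
      have wS: "w \<in> S" and ws: "set ws \<subseteq> S" using Cons.prems by auto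
      have w: "w \<in> carrier_vec N" using wS S by auto
      obtain e where "H *\<^sub>v w = e \<cdot>\<^sub>v w" using ev wS by (auto simp: eigenvector_def)
      then have "H *\<^sub>v lincomb N cs (w # ws) = (c * e) \<cdot>\<^sub>v w + H *\<^sub>v lincomb N cs' ws"
        unfolding Cons using H w lincomb_carrier[of ws N cs'] ws S
        by (auto simp: mult_add_distrib_mat_vec[OF H] mult_mat_vec[OF H w] smult_smult_assoc
            mult.commute)
      then show ?thesis
        using Cons.IH[OF ws] S_cspan[OF wS] V by (simp add: csubspace_smult csubspace_add)
    qed
  qed
qed

definition orthonormal :: "nat \<Rightarrow> complex vec list \<Rightarrow> bool" where
  "orthonormal N us \<longleftrightarrow> set us \<subseteq> carrier_vec N \<and>
     (\<forall>i<length us. \<forall>j<length us. us ! i \<bullet>c us ! j = (if i = j then 1 else 0))"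

lemma orthonormal_length_le:
  assumes o: "orthonormal N us"
  shows "length us \<le> N"
proof (rule ccontr)
  define k where "k = length us"
  assume "\<not> length us \<le> N"
  then have kN: "N < k" unfolding k_def by simp
  have uc: "us ! i \<in> carrier_vec N" if "i < k" for i
    using o that unfolding orthonormal_def k_def by auto
  have on: "us ! i \<bullet>c us ! j = (if i = j then 1 else 0)" if "i < k" "j < k" for i j
    using o that unfolding orthonormal_def k_def by blast
  \<comment> \<open>the k columns of K are orthonormal, so K is unitary although its last row vanishes\<close>
  define K where "K = mat k k (\<lambda>(i,j). if i < N then us ! j $ i else 0)"
  have Kc: "K \<in> carrier_mat k k" unfolding K_def by simp
  have "adjoint K * K = 1\<^sub>m k"
  proof (rule eq_matI)
    fix i j assume "i < dim_row (1\<^sub>m k)" "j < dim_col (1\<^sub>m k)"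
    then have ij: "i < k" "j < k" by auto
    have "(adjoint K * K) $$ (i,j) = (\<Sum>l<k. if l < N then us ! j $ l * cnj (us ! i $ l) else 0)"
      unfolding index_mult_mat_sum[OF adjoint_carrier[OF Kc] Kc ij]
      by (rule sum.cong) (use ij Kc in \<open>auto simp: K_def\<close>)
    also have "\<dots> = (\<Sum>l\<in>{..<N}. us ! j $ l * cnj (us ! i $ l))"
      using kN by (simp add: sum.If_cases Int_absorb1 flip: lessThan_def)
    also have "\<dots> = 1\<^sub>m k $$ (i,j)"
      using on[OF ij(2) ij(1)] ij cscalar_prod_sum[OF uc[OF ij(1)], of "us ! j"] by auto
    finally show "(adjoint K * K) $$ (i,j) = 1\<^sub>m k $$ (i,j)" .
  qed (use Kc in auto)
  then have "K * adjoint K = 1\<^sub>m k"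
    by (rule mat_mult_left_right_inverse[OF adjoint_carrier[OF Kc] Kc])
  moreover have "(K * adjoint K) $$ (k - 1, k - 1) =
      (\<Sum>l<k. K $$ (k - 1, l) * adjoint K $$ (l, k - 1))"
    using kN by (intro index_mult_mat_sum[OF Kc adjoint_carrier[OF Kc]]) auto
  moreover have "\<dots> = 0" using kN Kc by (intro sum.neutral) (auto simp: K_def)
  ultimately show False using kN by simp
qed

lemma orthonormal_snoc:
  assumes o: "orthonormal N us" and w: "w \<in> carrier_vec N" and ww: "w \<bullet>c w = 1"
    and wu: "\<forall>j<length us. w \<bullet>c us ! j = 0"
  shows "orthonormal N (us @ [w])"
proof -
  have "us ! i \<bullet>c w = 0" if i: "i < length us" for i
  proof -
    have "us ! i \<in> carrier_vec N" using o nth_mem[OF i] unfolding orthonormal_def by auto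
    then show ?thesis using cscalar_prod_swap[OF _ w, of "us ! i"] wu i by simp
  qed
  then show ?thesis
    using o w ww wu unfolding orthonormal_def by (auto simp: nth_append less_Suc_eq)
qed

lemma ocomp_carrier: "q \<in> ocomp N V \<Longrightarrow> q \<in> carrier_vec N"
  unfolding ocomp_def by auto

lemma ocompD: "q \<in> ocomp N V \<Longrightarrow> x \<in> V \<Longrightarrow> q \<bullet>c x = 0"
  unfolding ocomp_def by auto

lemma ocompD':
  assumes q: "q \<in> ocomp N V" and x: "x \<in> V" and V: "V \<subseteq> carrier_vec N"
  shows "x \<bullet>c q = 0"
  using cscalar_prod_swap[OF ocomp_carrier[OF q], of x] ocompD[OF q x] x V by auto

lemma ocomp_csubspace:
  assumes V: "V \<subseteq> carrier_vec N"
  shows "csubspace N (ocomp N V)"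
  unfolding csubspace_def
proof (intro conjI ballI allI subsetI)
  show "0\<^sub>v N \<in> ocomp N V" using V unfolding ocomp_def by auto
  fix x y a assume x: "x \<in> ocomp N V" and y: "y \<in> ocomp N V"
  have xc: "x \<in> carrier_vec N" and yc: "y \<in> carrier_vec N" using x y by (auto simp: ocomp_def)
  show "x + y \<in> ocomp N V" unfolding ocomp_def
    using xc yc V ocompD[OF x] ocompD[OF y] by (auto simp: cscalar_prod_add_left[of _ N])
  show "a \<cdot>\<^sub>v x \<in> ocomp N V" unfolding ocomp_def
    using xc V ocompD[OF x] by auto
qed (auto simp: ocomp_def)

lemma orthonormal_expansion_residual:
  assumes o: "orthonormal N us" and y: "y \<in> carrier_vec N" and j: "j < length us"
  shows "(y - lincomb N (map (\<lambda>u. y \<bullet>c u) us) us) \<bullet>c us ! j = 0"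
proof -
  have usc: "set us \<subseteq> carrier_vec N" and uj: "us ! j \<in> carrier_vec N"
    using o j unfolding orthonormal_def by auto
  have "lincomb N (map (\<lambda>u. y \<bullet>c u) us) us \<bullet>c us ! j =
      (\<Sum>i<length us. map (\<lambda>u. y \<bullet>c u) us ! i * (us ! i \<bullet>c us ! j))"
    by (rule lincomb_cscalar_prod[OF usc _ uj]) simp
  also have "\<dots> = (\<Sum>i<length us. (y \<bullet>c us ! i) * (if i = j then 1 else 0))"
    by (rule sum.cong) (use o j in \<open>auto simp: orthonormal_def\<close>)
  finally have "lincomb N (map (\<lambda>u. y \<bullet>c u) us) us \<bullet>c us ! j = y \<bullet>c us ! j"
    using j by (simp add: sum_delta_right)
  then show ?thesis
    using j y uj lincomb_carrier[OF usc]
    by (simp add: cscalar_prod_minus_left[of _ N])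
qed

lemma maximal_orthonormal_exists:
  obtains us where "orthonormal N us" "set us \<subseteq> V"
    "\<And>vs. orthonormal N vs \<Longrightarrow> set vs \<subseteq> V \<Longrightarrow> length vs \<le> length us"
proof -
  define L where "L = {length vs | vs. orthonormal N vs \<and> set vs \<subseteq> V}"
  have "L \<subseteq> {..N}" unfolding L_def using orthonormal_length_le by auto
  then have finL: "finite L" by (rule finite_subset) simp
  have "0 \<in> L" unfolding L_def by (rule CollectI, rule exI[of _ "[]"]) (simp add: orthonormal_def)
  then have "Max L \<in> L" using finL by (intro Max_in) auto
  then obtain us where o: "orthonormal N us" and usV: "set us \<subseteq> V" and len: "length us = Max L"
    unfolding L_def by auto
  have "length vs \<le> length us" if "orthonormal N vs" "set vs \<subseteq> V" for vs
    unfolding len using finL that unfolding L_def by (intro Max_ge) auto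
  then show thesis using that o usV by blast
qed

lemma maximal_orthonormal_expansion:
  assumes V: "csubspace N V" and o: "orthonormal N us" and usV: "set us \<subseteq> V"
    and max: "\<And>vs. orthonormal N vs \<Longrightarrow> set vs \<subseteq> V \<Longrightarrow> length vs \<le> length us"
    and x: "x \<in> V"
  shows "lincomb N (map (\<lambda>u. x \<bullet>c u) us) us = x"
proof (rule ccontr)
  define P where "P = lincomb N (map (\<lambda>u. x \<bullet>c u) us) us"
  assume "P \<noteq> x"
  have usc: "set us \<subseteq> carrier_vec N" using o by (simp add: orthonormal_def)
  have xc: "x \<in> carrier_vec N" using csubspace_carrier[OF V x] .
  have Pc: "P \<in> carrier_vec N" unfolding P_def by (rule lincomb_carrier[OF usc])
  define r where "r = x - P"
  have rV: "r \<in> V" unfolding r_def P_def by (rule csubspace_minus[OF V x lincomb_mem[OF V usV]])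
  have rc: "r \<in> carrier_vec N" using csubspace_carrier[OF V rV] .
  have "r \<noteq> 0\<^sub>v N" using \<open>P \<noteq> x\<close> minus_eq_0_vec_iff[OF xc Pc] unfolding r_def by simp
  \<comment> \<open>the normalised residual would extend the maximal family\<close>
  define w where "w = (1 / of_real (vnorm r)) \<cdot>\<^sub>v r"
  have wc: "w \<in> carrier_vec N" and wV: "w \<in> V"
    unfolding w_def using rc csubspace_smult[OF V rV] by auto
  have "w \<bullet>c w = 1"
    using vnorm_normalize[OF rc \<open>r \<noteq> 0\<^sub>v N\<close>] cscalar_prod_self[OF wc] unfolding w_def by simp
  moreover have "\<forall>j<length us. w \<bullet>c us ! j = 0"
  proof (intro allI impI)
    fix j assume j: "j < length us"
    have "us ! j \<in> carrier_vec N" using usc j by auto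
    then show "w \<bullet>c us ! j = 0"
      unfolding w_def using orthonormal_expansion_residual[OF o xc j] rc
      by (simp add: r_def P_def)
  qed
  ultimately have "orthonormal N (us @ [w])" by (rule orthonormal_snoc[OF o wc])
  with max[OF this] wV usV show False by simp
qed

lemma orthogonal_decomposition_exists:
  assumes V: "csubspace N V" and y: "y \<in> carrier_vec N"
  shows "\<exists>p\<in>V. y - p \<in> ocomp N V"
proof -
  obtain us where o: "orthonormal N us" and usV: "set us \<subseteq> V"
    and max: "\<And>vs. orthonormal N vs \<Longrightarrow> set vs \<subseteq> V \<Longrightarrow> length vs \<le> length us"
    by (rule maximal_orthonormal_exists[of N V]) blast
  have usc: "set us \<subseteq> carrier_vec N" using o by (simp add: orthonormal_def)
  define P where "P z = lincomb N (map (\<lambda>u. z \<bullet>c u) us) us" for z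
  have Pc: "P z \<in> carrier_vec N" for z unfolding P_def by (rule lincomb_carrier[OF usc])
  have "y - P y \<in> ocomp N V"
    unfolding ocomp_def
  proof (intro CollectI conjI ballI)
    show yc: "y - P y \<in> carrier_vec N" using y Pc by simp
    fix x assume x: "x \<in> V"
    have "P x \<bullet>c (y - P y) = (\<Sum>i<length us. map (\<lambda>u. x \<bullet>c u) us ! i * (us ! i \<bullet>c (y - P y)))"
      unfolding P_def[of x] by (rule lincomb_cscalar_prod[OF usc _ yc]) simp
    also have "\<dots> = 0"
    proof (rule sum.neutral, intro ballI)
      fix i assume "i \<in> {..<length us}"
      then have i: "i < length us" by simp
      have "us ! i \<in> carrier_vec N" using usc i by auto
      then have "us ! i \<bullet>c (y - P y) = 0"
        using orthonormal_expansion_residual[OF o y i] cscalar_prod_swap[OF yc] by (simp add: P_def)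
      then show "map (\<lambda>u. x \<bullet>c u) us ! i * (us ! i \<bullet>c (y - P y)) = 0" by simp
    qed
    finally show "(y - P y) \<bullet>c x = 0"
      using maximal_orthonormal_expansion[OF V o usV max x] cscalar_prod_swap[OF Pc yc, of x]
      by (simp add: P_def)
  qed
  then show ?thesis using lincomb_mem[OF V usV] unfolding P_def by blast
qed

lemma proj_unique:
  assumes W: "csubspace N W" and y: "y \<in> carrier_vec N" and w: "w \<in> W"
    and yw: "y - w \<in> ocomp N W"
  shows "proj N W y = w"
  unfolding proj_def
proof (rule the_equality)
  show "w \<in> W \<and> y - w \<in> ocomp N W" using w yw by simp
  fix w' assume w': "w' \<in> W \<and> y - w' \<in> ocomp N W"
  have wc: "w \<in> carrier_vec N" and w'c: "w' \<in> carrier_vec N"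
    using w w' csubspace_carrier[OF W] by auto
  define d where "d = w' - w"
  have dW: "d \<in> W" unfolding d_def using csubspace_minus[OF W] w w' by simp
  have dc: "d \<in> carrier_vec N" using dW csubspace_carrier[OF W] by auto
  have "d = (y - w) - (y - w')" unfolding d_def by (rule eq_vecI) (use y wc w'c in auto)
  then have "d \<bullet>c d = (y - w) \<bullet>c d - (y - w') \<bullet>c d"
    using y wc w'c dc by (simp add: cscalar_prod_minus_left[of _ N])
  also have "\<dots> = 0" using ocompD[OF yw dW] ocompD[OF conjunct2[OF w'] dW] by simp
  finally have "w' - w = 0\<^sub>v N" using dc unfolding d_def by simp
  then show "w' = w" using minus_eq_0_vec_iff[OF w'c wc] by simp
qed

lemma proj_mem:
  assumes V: "csubspace N V" and y: "y \<in> carrier_vec N"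
  shows "proj N V y \<in> V" and "y - proj N V y \<in> ocomp N V"
proof -
  obtain p where "p \<in> V" "y - p \<in> ocomp N V"
    using orthogonal_decomposition_exists[OF V y] by blast
  moreover have "proj N V y = p" by (rule proj_unique[OF V y]) fact+
  ultimately show "proj N V y \<in> V" "y - proj N V y \<in> ocomp N V" by simp_all
qed

lemma proj_ocomp:
  assumes V: "csubspace N V" and y: "y \<in> carrier_vec N"
  shows "proj N (ocomp N V) y = y - proj N V y"
proof -
  have Vc: "V \<subseteq> carrier_vec N" using V by (simp add: csubspace_def)
  have p: "proj N V y \<in> V" and q: "y - proj N V y \<in> ocomp N V" using proj_mem[OF V y] by auto
  have pc: "proj N V y \<in> carrier_vec N" using p Vc by auto
  have "y - (y - proj N V y) = proj N V y" by (rule eq_vecI) (use y pc in auto)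
  moreover have "proj N V y \<in> ocomp N (ocomp N V)"
    unfolding ocomp_def[of N "ocomp N V"]
  proof (intro CollectI conjI ballI pc)
    fix z assume "z \<in> ocomp N V"
    then show "proj N V y \<bullet>c z = 0" by (rule ocompD'[OF _ p Vc])
  qed
  ultimately have "y - (y - proj N V y) \<in> ocomp N (ocomp N V)" by simp
  then show ?thesis by (rule proj_unique[OF ocomp_csubspace[OF Vc] y q])
qed

lemma vnorm_proj_square:
  assumes V: "csubspace N V" and y: "y \<in> carrier_vec N"
  shows "(vnorm y)^2 = (vnorm (proj N V y))^2 + (vnorm (y - proj N V y))^2"
proof -
  have p: "proj N V y \<in> V" and q: "y - proj N V y \<in> ocomp N V" using proj_mem[OF V y] by auto
  have pc: "proj N V y \<in> carrier_vec N" using csubspace_carrier[OF V p] .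
  have Vc: "V \<subseteq> carrier_vec N" using V by (simp add: csubspace_def)
  have qc: "y - proj N V y \<in> carrier_vec N" using y pc by simp
  have y_eq: "proj N V y + (y - proj N V y) = y" by (rule eq_vecI) (use y pc in auto)
  show ?thesis
    using vnorm_add_square[OF pc qc ocompD'[OF q p Vc]] unfolding y_eq .
qed

lemma vnorm_proj_ocomp_le:
  assumes V: "csubspace N V" and y: "y \<in> carrier_vec N"
  shows "vnorm (proj N (ocomp N V) y) \<le> vnorm y"
proof -
  have "(vnorm (y - proj N V y))^2 \<le> (vnorm y)^2" using vnorm_proj_square[OF V y] by simp
  then have "vnorm (y - proj N V y) \<le> vnorm y" by (rule power2_le_imp_le) (rule vnorm_nonneg)
  then show ?thesis unfolding proj_ocomp[OF V y] .
qed

lemma vnorm_proj_eq_imp_mem: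
  assumes V: "csubspace N V" and y: "y \<in> carrier_vec N" and eq: "vnorm (proj N V y) = vnorm y"
  shows "y \<in> V"
proof -
  have pc: "proj N V y \<in> carrier_vec N" using csubspace_carrier[OF V proj_mem(1)[OF V y]] .
  have "vnorm (y - proj N V y) = 0" using vnorm_proj_square[OF V y] eq by simp
  then have "y = proj N V y"
    using vnorm_eq_0_iff[of "y - proj N V y" N] minus_eq_0_vec_iff[OF y pc] y pc by simp
  then show ?thesis using proj_mem(1)[OF V y] by simp
qed

lemma vnorm_minus_proj_le:
  assumes V: "csubspace N V" and y: "y \<in> carrier_vec N" and v: "v \<in> V"
  shows "vnorm (y - proj N V y) \<le> vnorm (y - v)"
proof -
  have Vc: "V \<subseteq> carrier_vec N" using V by (simp add: csubspace_def)
  have p: "proj N V y \<in> V" and q: "y - proj N V y \<in> ocomp N V" using proj_mem[OF V y] by auto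
  have pc: "proj N V y \<in> carrier_vec N" and vc: "v \<in> carrier_vec N"
    using csubspace_carrier[OF V p] csubspace_carrier[OF V v] .
  have d: "proj N V y - v \<in> V" by (rule csubspace_minus[OF V p v])
  have eq: "(y - proj N V y) + (proj N V y - v) = y - v" by (rule eq_vecI) (use y pc vc in auto)
  have "(vnorm (y - v))^2 = (vnorm (y - proj N V y))^2 + (vnorm (proj N V y - v))^2"
    using vnorm_add_square[OF minus_carrier_vec[OF y pc] minus_carrier_vec[OF pc vc] ocompD[OF q d]]
    unfolding eq .
  then have "(vnorm (y - proj N V y))^2 \<le> (vnorm (y - v))^2" by simp
  then show ?thesis by (rule power2_le_imp_le) (rule vnorm_nonneg)
qed

lemma cscalar_prod_proj_ocomp:
  assumes V: "csubspace N V" and y: "y \<in> carrier_vec N" and q: "q \<in> ocomp N V"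
  shows "y \<bullet>c q = proj N (ocomp N V) y \<bullet>c q"
proof -
  have Vc: "V \<subseteq> carrier_vec N" using V by (simp add: csubspace_def)
  have p: "proj N V y \<in> V" using proj_mem[OF V y] by simp
  have pc: "proj N V y \<in> carrier_vec N" using csubspace_carrier[OF V p] .
  have "y = proj N V y + (y - proj N V y)" by (rule eq_vecI) (use y pc in auto)
  then have "y \<bullet>c q = proj N V y \<bullet>c q + (y - proj N V y) \<bullet>c q"
    using cscalar_prod_add_left[OF pc _ ocomp_carrier[OF q], of "y - proj N V y"] y pc by simp
  then show ?thesis using ocompD'[OF q p Vc] proj_ocomp[OF V y] by simp
qed

lemma vnorm_proj_le_ocomp_part:
  assumes V: "csubspace N V" and a: "a \<in> carrier_vec N" "vnorm a = 1"
    and small: "vnorm (proj N V a) \<le> 1/10"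
  shows "vnorm (proj N V a) \<le> vnorm (a - proj N V a)"
proof -
  have "(vnorm (proj N V a))^2 \<le> (1/10)^2" by (rule power_mono[OF small vnorm_nonneg])
  then have "(vnorm (proj N V a))^2 \<le> (vnorm (a - proj N V a))^2"
    using vnorm_proj_square[OF V a(1)] a(2) by (simp add: power2_eq_square)
  then show ?thesis by (rule power2_le_imp_le) (rule vnorm_nonneg)
qed

lemma vnorm_ocomp_part_pos:
  assumes V: "csubspace N V" and a: "a \<in> carrier_vec N" "vnorm a = 1"
    and small: "vnorm (proj N V a) \<le> vnorm (a - proj N V a)"
  shows "0 < vnorm (a - proj N V a)"
proof -
  have "(vnorm (proj N V a))^2 + (vnorm (a - proj N V a))^2 = 1"
    using vnorm_proj_square[OF V a(1)] a(2) by simp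
  then have "vnorm (a - proj N V a) \<noteq> 0" using small vnorm_nonneg[of "proj N V a"] by auto
  then show ?thesis using vnorm_nonneg[of "a - proj N V a"] by (simp add: less_le)
qed

section \<open>Minimal energies on a subspace and on its complement\<close>

definition unit_vecs_in :: "complex vec set \<Rightarrow> complex vec set" where
  "unit_vecs_in U = {x \<in> U. vnorm x = 1}"

definition min_energy :: "complex mat \<Rightarrow> complex vec set \<Rightarrow> real" where
  "min_energy H U = (INF x\<in>unit_vecs_in U. qform H x)"

lemma bdd_below_qform_unit_vecs_in:
  assumes H: "H \<in> carrier_mat N N" and U: "U \<subseteq> carrier_vec N"
  shows "bdd_below (qform H ` unit_vecs_in U)"
proof (rule bdd_belowI2)
  fix x assume "x \<in> unit_vecs_in U"
  then have "x \<in> carrier_vec N" "vnorm x = 1" using U by (auto simp: unit_vecs_in_def)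
  then show "- frobenius_norm H \<le> qform H x" using abs_qform_le[OF H] by force
qed

lemma min_energy_le_qform:
  assumes U: "csubspace N U" and H: "H \<in> carrier_mat N N" and x: "x \<in> U"
  shows "min_energy H U * (vnorm x)^2 \<le> qform H x"
proof (cases "x = 0\<^sub>v N")
  case True
  then show ?thesis using H vnorm_eq_0_iff[of "0\<^sub>v N" N] by (simp add: qform_def)
next
  case False
  have xc: "x \<in> carrier_vec N" using csubspace_carrier[OF U x] .
  have nx: "0 < vnorm x" using vnorm_pos[OF xc False] .
  define u where "u = (1 / of_real (vnorm x)) \<cdot>\<^sub>v x"
  have "u \<in> unit_vecs_in U"
    unfolding unit_vecs_in_def u_def
      using vnorm_normalize[OF xc False] csubspace_smult[OF U x] by simp
  moreover have "U \<subseteq> carrier_vec N" using U by (simp add: csubspace_def)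
  ultimately have "min_energy H U \<le> qform H u"
    unfolding min_energy_def by (metis cINF_lower bdd_below_qform_unit_vecs_in[OF H])
  also have "qform H u = qform H x / (vnorm x)^2"
    unfolding u_def qform_smult[OF H xc] using nx by (simp add: norm_divide power_divide)
  finally show ?thesis using nx by (simp add: pos_le_divide_eq)
qed

lemma le_min_energy:
  "unit_vecs_in U \<noteq> {} \<Longrightarrow> (\<And>x. x \<in> unit_vecs_in U \<Longrightarrow> c \<le> qform H x) \<Longrightarrow> c \<le> min_energy H U"
  unfolding min_energy_def by (rule cINF_greatest)

lemma lipschitz_imp_continuous_on:
  fixes f :: "real \<Rightarrow> real"
  assumes lip: "\<And>s t. \<bar>f s - f t\<bar> \<le> K * \<bar>s - t\<bar>"
  shows "continuous_on A f"
proof (rule continuous_at_imp_continuous_on, intro ballI)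
  fix x
  show "isCont f x" unfolding isCont_def LIM_eq
  proof (intro allI impI)
    fix r :: real assume r: "r > 0"
    define d where "d = r / (\<bar>K\<bar> + 1)"
    have d: "d > 0" unfolding d_def using r by simp
    show "\<exists>s>0. \<forall>y. y \<noteq> x \<and> norm (y - x) < s \<longrightarrow> norm (f y - f x) < r"
    proof (intro exI[of _ d] conjI allI impI d)
      fix y assume "y \<noteq> x \<and> norm (y - x) < d"
      then have yx: "\<bar>y - x\<bar> < d" by simp
      have "\<bar>f y - f x\<bar> \<le> \<bar>K\<bar> * \<bar>y - x\<bar>"
        using lip[of y x] abs_ge_self[of K] by (meson abs_ge_zero mult_right_mono order_trans)
      also have "\<dots> \<le> \<bar>K\<bar> * d" using yx by (simp add: mult_left_mono)
      also have "\<dots> < (\<bar>K\<bar> + 1) * d" using d by simp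
      also have "\<dots> = r" unfolding d_def by simp
      finally show "norm (f y - f x) < r" by simp
    qed
  qed
qed

lemma min_energy_interp_lipschitz:
  assumes H0: "H0 \<in> carrier_mat N N" and H1: "H1 \<in> carrier_mat N N"
    and U: "U \<subseteq> carrier_vec N" and ne: "unit_vecs_in U \<noteq> {}"
  shows "\<bar>min_energy (interp H0 H1 s) U - min_energy (interp H0 H1 t) U\<bar>
    \<le> (frobenius_norm H0 + frobenius_norm H1) * \<bar>s - t\<bar>"
proof -
  define L where "L = frobenius_norm H0 + frobenius_norm H1"
  have diff: "qform (interp H0 H1 a) x \<le> qform (interp H0 H1 b) x + L * \<bar>a - b\<bar>"
    if x: "x \<in> unit_vecs_in U" for a b x
  proof -
    have xc: "x \<in> carrier_vec N" and nx: "vnorm x = 1" using x U by (auto simp: unit_vecs_in_def)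
    have "qform (interp H0 H1 a) x - qform (interp H0 H1 b) x =
        (b - a) * qform H0 x + (a - b) * qform H1 x"
      using qform_interp[OF H0 H1 xc] by (simp add: algebra_simps)
    also have "\<dots> \<le> \<bar>a - b\<bar> * \<bar>qform H0 x\<bar> + \<bar>a - b\<bar> * \<bar>qform H1 x\<bar>"
      by (metis (no_types, opaque_lifting) abs_ge_self abs_minus_commute abs_mult abs_triangle_ineq
          order_trans)
    also have "\<dots> \<le> \<bar>a - b\<bar> * frobenius_norm H0 + \<bar>a - b\<bar> * frobenius_norm H1"
      using abs_qform_le[OF H0 xc] abs_qform_le[OF H1 xc] nx
      by (intro add_mono mult_left_mono) auto
    finally show ?thesis unfolding L_def by (simp add: algebra_simps)
  qed
  have one: "min_energy (interp H0 H1 a) U - L * \<bar>a - b\<bar> \<le> min_energy (interp H0 H1 b) U" for a b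
  proof (rule le_min_energy[OF ne])
    fix x assume x: "x \<in> unit_vecs_in U"
    have "min_energy (interp H0 H1 a) U \<le> qform (interp H0 H1 a) x"
      unfolding min_energy_def
      by (rule cINF_lower[OF bdd_below_qform_unit_vecs_in[OF interp_carrier[OF H0 H1] U] x])
    then show "min_energy (interp H0 H1 a) U - L * \<bar>a - b\<bar> \<le> qform (interp H0 H1 b) x"
      using diff[OF x, of a b] by simp
  qed
  show ?thesis using one[of s t] one[of t s] unfolding L_def
    by (simp add: abs_minus_commute abs_le_iff)
qed

definition offdiag_bounded :: "nat \<Rightarrow> complex vec set \<Rightarrow> complex mat \<Rightarrow> real \<Rightarrow> bool" where
  "offdiag_bounded N V H c \<longleftrightarrow>
    (\<forall>p\<in>V. \<forall>q\<in>ocomp N V. cmod ((H *\<^sub>v p) \<bullet>c q) \<le> c * vnorm p * vnorm q)"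

lemma offdiag_bounded_Re:
  assumes off: "offdiag_bounded N V H c" and c: "0 \<le> c" and p: "p \<in> V" and q: "q \<in> ocomp N V"
  shows "\<bar>2 * Re ((H *\<^sub>v p) \<bullet>c q)\<bar> \<le> c * ((vnorm p)^2 + (vnorm q)^2)"
proof -
  have "\<bar>2 * Re ((H *\<^sub>v p) \<bullet>c q)\<bar> \<le> c * (2 * vnorm p * vnorm q)"
    using off p q abs_Re_le_cmod[of "(H *\<^sub>v p) \<bullet>c q"] unfolding offdiag_bounded_def by force
  also have "\<dots> \<le> c * ((vnorm p)^2 + (vnorm q)^2)"
    using c by (intro mult_left_mono) (auto simp: sum_squares_bound)
  finally show ?thesis .
qed

lemma lam0_ge_min_energy_blocks:
  assumes h: "hermitian N H" and V: "csubspace N V" and N: "0 < N"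
    and off: "offdiag_bounded N V H c" and c: "0 \<le> c"
  shows "min (min_energy H V) (min_energy H (ocomp N V)) - c \<le> lam H 0"
proof -
  have H: "H \<in> carrier_mat N N" using h by (simp add: hermitian_iff_adjoint)
  have Vc: "V \<subseteq> carrier_vec N" using V by (simp add: csubspace_def)
  have W: "csubspace N (ocomp N V)" by (rule ocomp_csubspace[OF Vc])
  obtain g where g: "g \<in> carrier_vec N" "vnorm g = 1" "qform H g = lam H 0"
    using ground_vector_exists[OF h N] by blast
  define p where "p = proj N V g"
  define q where "q = g - p"
  have p: "p \<in> V" and q: "q \<in> ocomp N V" unfolding p_def q_def using proj_mem[OF V g(1)] by auto
  have pc: "p \<in> carrier_vec N" and qc: "q \<in> carrier_vec N"
    using csubspace_carrier[OF V p] csubspace_carrier[OF W q] .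
  have gpq: "g = p + q" unfolding q_def by (rule eq_vecI) (use g pc in auto)
  have n1: "(vnorm p)^2 + (vnorm q)^2 = 1"
    using vnorm_proj_square[OF V g(1)] g(2) unfolding p_def q_def by simp
  have "min (min_energy H V) (min_energy H (ocomp N V)) * ((vnorm p)^2 + (vnorm q)^2)
      \<le> min_energy H V * (vnorm p)^2 + min_energy H (ocomp N V) * (vnorm q)^2"
    by (simp add: distrib_left add_mono mult_right_mono)
  also have "\<dots> \<le> qform H p + qform H q"
    by (intro add_mono min_energy_le_qform[OF V H p] min_energy_le_qform[OF W H q])
  finally have "min (min_energy H V) (min_energy H (ocomp N V)) \<le> qform H p + qform H q"
    using n1 by simp
  moreover have "qform H g = qform H p + qform H q + 2 * Re ((H *\<^sub>v p) \<bullet>c q)"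
    unfolding gpq by (rule qform_add[OF h pc qc])
  moreover have "\<bar>2 * Re ((H *\<^sub>v p) \<bullet>c q)\<bar> \<le> c" using offdiag_bounded_Re[OF off c p q] n1 by simp
  ultimately show ?thesis using g(3) by linarith
qed

lemma min_energy_approx:
  assumes H: "H \<in> carrier_mat N N" and U: "U \<subseteq> carrier_vec N" and ne: "unit_vecs_in U \<noteq> {}"
    and e: "0 < e"
  obtains x where "x \<in> U" "vnorm x = 1" "qform H x < min_energy H U + e"
proof -
  have "min_energy H U < min_energy H U + e" using e by simp
  then obtain x where "x \<in> unit_vecs_in U" "qform H x < min_energy H U + e"
    unfolding min_energy_def
      using cINF_less_iff[OF ne bdd_below_qform_unit_vecs_in[OF H U]] by blast
  then show thesis using that by (auto simp: unit_vecs_in_def)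
qed

lemma nontrivial_zero_combination:
  fixes x y :: "'a :: field"
  shows "\<exists>a b. (a, b) \<noteq> (0, 0) \<and> a * x + b * y = 0"
proof (cases "x = 0")
  case True
  then show ?thesis by (intro exI[of _ 1] exI[of _ 0]) simp
next
  case False
  then show ?thesis by (intro exI[of _ y] exI[of _ "- x"]) (simp add: mult.commute)
qed

lemma lam1_le_min_energy_blocks:
  assumes h: "hermitian N H" and V: "csubspace N V" and N: "0 < N"
    and off: "offdiag_bounded N V H c" and c: "0 \<le> c"
    and neV: "unit_vecs_in V \<noteq> {}" and neW: "unit_vecs_in (ocomp N V) \<noteq> {}"
  shows "lam H 1 \<le> max (min_energy H V) (min_energy H (ocomp N V)) + c"
proof (rule field_le_epsilon)
  fix e :: real assume e: "0 < e"
  define E where "E = max (min_energy H V) (min_energy H (ocomp N V))"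
  have H: "H \<in> carrier_mat N N" using h by (simp add: hermitian_iff_adjoint)
  have Vc: "V \<subseteq> carrier_vec N" using V by (simp add: csubspace_def)
  have W: "csubspace N (ocomp N V)" by (rule ocomp_csubspace[OF Vc])
  obtain g where g: "g \<in> carrier_vec N"
    and lam1: "\<And>z. z \<in> carrier_vec N \<Longrightarrow> z \<bullet>c g = 0 \<Longrightarrow> lam H 1 * (vnorm z)^2 \<le> qform H z"
    using ground_vector_exists[OF h N] by blast
  have Wc: "ocomp N V \<subseteq> carrier_vec N" using W by (simp add: csubspace_def)
  obtain v where v: "v \<in> V" "vnorm v = 1" and Ev0: "qform H v < min_energy H V + e"
    using min_energy_approx[OF H Vc neV e] by blast
  obtain w where w: "w \<in> ocomp N V" "vnorm w = 1"
    and Ew0: "qform H w < min_energy H (ocomp N V) + e"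
    using min_energy_approx[OF H Wc neW e] by blast
  have Ev: "qform H v < E + e" and Ew: "qform H w < E + e"
    using Ev0 Ew0 unfolding E_def by linarith+
  have vc: "v \<in> carrier_vec N" and wc: "w \<in> carrier_vec N"
    using csubspace_carrier[OF V v(1)] csubspace_carrier[OF W w(1)] .
  \<comment> \<open>the combination z of v and w below is orthogonal to g, so lam H 1 bounds its energy\<close>
  obtain a b where ab: "(a, b) \<noteq> (0, 0)" and perp: "a * (v \<bullet>c g) + b * (w \<bullet>c g) = 0"
    using nontrivial_zero_combination by blast
  define m where "m = (cmod a)^2 + (cmod b)^2"
  have m: "0 < m" unfolding m_def using ab by (auto simp: add_pos_nonneg add_nonneg_pos)
  have p: "a \<cdot>\<^sub>v v \<in> V" and q: "b \<cdot>\<^sub>v w \<in> ocomp N V"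
    using csubspace_smult[OF V v(1)] csubspace_smult[OF W w(1)] .
  have pc: "a \<cdot>\<^sub>v v \<in> carrier_vec N" and qc: "b \<cdot>\<^sub>v w \<in> carrier_vec N" using vc wc by auto
  define z where "z = a \<cdot>\<^sub>v v + b \<cdot>\<^sub>v w"
  have zc: "z \<in> carrier_vec N" unfolding z_def using pc qc by simp
  have "z \<bullet>c g = 0"
    unfolding z_def using perp pc qc vc wc g by (simp add: cscalar_prod_add_left[of _ N])
  then have "lam H 1 * m \<le> qform H z"
    using lam1[OF zc] vnorm_add_square[OF pc qc ocompD'[OF q p Vc]] v(2) w(2)
    unfolding z_def m_def by (simp add: vnorm_smult[OF vc] vnorm_smult[OF wc])
  also have "qform H z = (cmod a)^2 * qform H v + (cmod b)^2 * qform H w +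
      2 * Re ((H *\<^sub>v (a \<cdot>\<^sub>v v)) \<bullet>c (b \<cdot>\<^sub>v w))"
    unfolding z_def qform_add[OF h pc qc] qform_smult[OF H vc] qform_smult[OF H wc] ..
  also have "\<dots> \<le> (cmod a)^2 * (E + e) + (cmod b)^2 * (E + e) + c * m"
    using offdiag_bounded_Re[OF off c p q] Ev Ew v(2) w(2)
    unfolding m_def
      by (intro add_mono mult_left_mono) (auto simp: vnorm_smult[OF vc] vnorm_smult[OF wc])
  also have "\<dots> = (E + c + e) * m" unfolding m_def by (simp add: algebra_simps)
  finally show "lam H 1 \<le> E + c + e" using m by simp
qed

lemma gap_le_min_energy_blocks:
  assumes h: "hermitian N H" and V: "csubspace N V" and N: "0 < N"
    and off: "offdiag_bounded N V H c" and c: "0 \<le> c"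
    and neV: "unit_vecs_in V \<noteq> {}" and neW: "unit_vecs_in (ocomp N V) \<noteq> {}"
  shows "lam H 1 - lam H 0 \<le> \<bar>min_energy H (ocomp N V) - min_energy H V\<bar> + 2 * c"
  using lam0_ge_min_energy_blocks[OF h V N off c] lam1_le_min_energy_blocks[OF h V N off c neV neW]
  by (simp add: max_def min_def split: if_splits)

lemma escape_rate_ge:
  assumes V: "csubspace N V" and H: "H \<in> carrier_mat N N" and v: "v \<in> V" "vnorm v = 1"
  shows "vnorm (proj N (ocomp N V) (H *\<^sub>v v)) \<le> escape_rate N V H"
  unfolding escape_rate_def
proof (rule cSup_upper)
  show "vnorm (proj N (ocomp N V) (H *\<^sub>v v))
      \<in> {vnorm (proj N (ocomp N V) (H *\<^sub>v v)) | v. v \<in> V \<and> vnorm v = 1}"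
    using v by blast
  show "bdd_above {vnorm (proj N (ocomp N V) (H *\<^sub>v v)) | v. v \<in> V \<and> vnorm v = 1}"
  proof (rule bdd_aboveI, safe)
    fix u assume u: "u \<in> V" "vnorm u = 1"
    have uc: "u \<in> carrier_vec N" using csubspace_carrier[OF V u(1)] .
    have "vnorm (proj N (ocomp N V) (H *\<^sub>v u)) \<le> vnorm (H *\<^sub>v u)"
      by (rule vnorm_proj_ocomp_le[OF V mult_mat_vec_carrier[OF H uc]])
    also have "\<dots> \<le> frobenius_norm H * vnorm u" by (rule vnorm_mult_mat_vec_le[OF H uc])
    finally show "vnorm (proj N (ocomp N V) (H *\<^sub>v u)) \<le> frobenius_norm H" using u(2) by simp
  qed
qed

lemma escape_rate_nonneg:
  "csubspace N V \<Longrightarrow> H \<in> carrier_mat N N \<Longrightarrow> unit_vecs_in V \<noteq> {} \<Longrightarrow> 0 \<le> escape_rate N V H"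
  unfolding unit_vecs_in_def using escape_rate_ge vnorm_nonneg by (blast intro: order_trans)

lemma escape_rate_offdiag_bounded:
  assumes V: "csubspace N V" and H: "H \<in> carrier_mat N N"
  shows "offdiag_bounded N V H (escape_rate N V H)"
  unfolding offdiag_bounded_def
proof (intro ballI)
  fix p q assume p: "p \<in> V" and q: "q \<in> ocomp N V"
  have pc: "p \<in> carrier_vec N" and qc: "q \<in> carrier_vec N"
    using csubspace_carrier[OF V p] ocomp_carrier[OF q] .
  show "cmod ((H *\<^sub>v p) \<bullet>c q) \<le> escape_rate N V H * vnorm p * vnorm q"
  proof (cases "p = 0\<^sub>v N")
    case True
    then show ?thesis using H qc vnorm_eq_0_iff[OF pc] by simp
  next
    case False
    define w where "w = (1 / of_real (vnorm p)) \<cdot>\<^sub>v p"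
    have np: "0 < vnorm p" using vnorm_pos[OF pc False] .
    have wV: "w \<in> V" and wc: "w \<in> carrier_vec N" and nw: "vnorm w = 1"
      unfolding w_def using csubspace_smult[OF V p] pc vnorm_normalize[OF pc False] by auto
    have pw: "p = of_real (vnorm p) \<cdot>\<^sub>v w" unfolding w_def smult_smult_assoc using np by simp
    define y where "y = H *\<^sub>v w"
    have yc: "y \<in> carrier_vec N" unfolding y_def using H wc by simp
    have "proj N (ocomp N V) y \<in> carrier_vec N"
      using proj_ocomp[OF V yc] ocomp_carrier[OF proj_mem(2)[OF V yc]] by simp
    then have yq: "cmod (y \<bullet>c q) \<le> vnorm (proj N (ocomp N V) y) * vnorm q"
      unfolding cscalar_prod_proj_ocomp[OF V yc q] by (rule norm_cscalar_prod_le[OF _ qc])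
    have "vnorm (proj N (ocomp N V) y) \<le> escape_rate N V H"
      unfolding y_def by (rule escape_rate_ge[OF V H wV nw])
    then have "vnorm (proj N (ocomp N V) y) * vnorm q \<le> escape_rate N V H * vnorm q"
      by (rule mult_right_mono) (rule vnorm_nonneg)
    with yq have "cmod (y \<bullet>c q) \<le> escape_rate N V H * vnorm q" by simp
    moreover have "H *\<^sub>v p = of_real (vnorm p) \<cdot>\<^sub>v y"
      unfolding y_def by (subst pw) (rule mult_mat_vec[OF H wc])
    then have "cmod ((H *\<^sub>v p) \<bullet>c q) = vnorm p * cmod (y \<bullet>c q)"
      using cscalar_prod_smult_left[OF yc qc] np by (simp add: norm_mult)
    ultimately show ?thesis
      using mult_left_mono[of "cmod (y \<bullet>c q)" _ "vnorm p"] np by (simp add: mult.assoc)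
  qed
qed

lemma escape_rate_le_opnorm:
  assumes V: "csubspace N V" and H0: "H0 \<in> carrier_mat N N" and H1: "H1 \<in> carrier_mat N N"
    and inv: "\<forall>x\<in>V. H0 *\<^sub>v x \<in> V" and ne: "unit_vecs_in V \<noteq> {}"
  shows "escape_rate N V H1 \<le> opnorm (H0 - H1)"
  unfolding escape_rate_def
proof (rule cSup_least)
  show "{vnorm (proj N (ocomp N V) (H1 *\<^sub>v v)) | v. v \<in> V \<and> vnorm v = 1} \<noteq> {}"
    using ne unfolding unit_vecs_in_def by blast
  fix x assume "x \<in> {vnorm (proj N (ocomp N V) (H1 *\<^sub>v v)) | v. v \<in> V \<and> vnorm v = 1}"
  then obtain v where v: "v \<in> V" "vnorm v = 1" and x: "x = vnorm (proj N (ocomp N V) (H1 *\<^sub>v v))"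
    by blast
  have vc: "v \<in> carrier_vec N" using csubspace_carrier[OF V v(1)] .
  have H1v: "H1 *\<^sub>v v \<in> carrier_vec N" using H1 vc by simp
  \<comment> \<open>H0 v lies in V, so it approximates H1 v no better than the orthogonal projection does\<close>
  have "x \<le> vnorm (H1 *\<^sub>v v - H0 *\<^sub>v v)"
    unfolding x proj_ocomp[OF V H1v] by (rule vnorm_minus_proj_le[OF V H1v]) (use inv v in blast)
  also have "H1 *\<^sub>v v - H0 *\<^sub>v v = (-1) \<cdot>\<^sub>v ((H0 - H1) *\<^sub>v v)"
    using H0 H1 vc by (subst minus_mult_distrib_mat_vec[OF H0 H1 vc]) (rule eq_vecI, auto)
  also have "vnorm \<dots> \<le> opnorm (H0 - H1)"
    using vnorm_le_opnorm[OF minus_carrier_mat[OF H1, of H0] vc v(2)]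
      vnorm_smult[OF mult_mat_vec_carrier[OF minus_carrier_mat[OF H1, of H0] vc], of "-1"]
    by simp
  finally show "x \<le> opnorm (H0 - H1)" .
qed

section \<open>The gap bound\<close>

lemma lam0_le_min_energy:
  assumes h: "hermitian N H" and U: "U \<subseteq> carrier_vec N" and ne: "unit_vecs_in U \<noteq> {}"
  shows "lam H 0 \<le> min_energy H U"
proof (rule le_min_energy[OF ne])
  fix x assume "x \<in> unit_vecs_in U"
  then have x: "x \<in> carrier_vec N" "vnorm x = 1" using U by (auto simp: unit_vecs_in_def)
  then show "lam H 0 \<le> qform H x" using lam0_le_qform[OF h unit_vec_dim_pos[OF x] x(1)] by simp
qed

lemma qform_eigenvector:
  assumes x: "x \<in> carrier_vec N" "vnorm x = 1" and Hx: "H *\<^sub>v x = of_real \<mu> \<cdot>\<^sub>v x"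
  shows "qform H x = \<mu>"
  unfolding qform_def Hx using cscalar_prod_smult_left[OF x(1) x(1)] cscalar_prod_self[OF x(1)] x(2)
  by simp

lemma min_energy_le_eigenvalue:
  assumes H: "H \<in> carrier_mat N N" and U: "U \<subseteq> carrier_vec N" and x: "x \<in> U" "vnorm x = 1"
    and Hx: "H *\<^sub>v x = of_real \<mu> \<cdot>\<^sub>v x"
  shows "min_energy H U \<le> \<mu>"
proof -
  have "x \<in> unit_vecs_in U" using x by (simp add: unit_vecs_in_def)
  then have "min_energy H U \<le> qform H x"
    unfolding min_energy_def by (rule cINF_lower[OF bdd_below_qform_unit_vecs_in[OF H U]])
  then show ?thesis using qform_eigenvector[OF _ x(2) Hx] x(1) U by blast
qed

lemma min_energy_ocomp_le:
  assumes h: "hermitian N H"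
    and V: "csubspace N V" and off: "offdiag_bounded N V H c" and c: "0 \<le> c"
    and a: "a \<in> carrier_vec N" "vnorm a = 1" and Ha: "H *\<^sub>v a = of_real \<mu> \<cdot>\<^sub>v a"
    and small: "vnorm (proj N V a) \<le> vnorm (a - proj N V a)"
  shows "min_energy H (ocomp N V) \<le> \<mu> + c"
proof -
  have H: "H \<in> carrier_mat N N" using h by (simp add: hermitian_iff_adjoint)
  have Vc: "V \<subseteq> carrier_vec N" using V by (simp add: csubspace_def)
  define p where "p = proj N V a"
  define q where "q = a - p"
  have p: "p \<in> V" and q: "q \<in> ocomp N V" unfolding p_def q_def using proj_mem[OF V a(1)] by auto
  have pc: "p \<in> carrier_vec N" and qc: "q \<in> carrier_vec N"
    using csubspace_carrier[OF V p] ocomp_carrier[OF q] .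
  have small': "vnorm p \<le> vnorm q" using small unfolding p_def q_def .
  have nq: "0 < vnorm q" unfolding q_def p_def by (rule vnorm_ocomp_part_pos[OF V a small])
  \<comment> \<open>since a is an eigenvector, only the coupling of p to q perturbs the energy of q\<close>
  have "a = p + q" unfolding q_def by (rule eq_vecI) (use a(1) pc in auto)
  then have "a \<bullet>c q = p \<bullet>c q + q \<bullet>c q" using cscalar_prod_add_left[OF pc qc qc] by simp
  then have aq: "a \<bullet>c q = of_real ((vnorm q)^2)"
    using ocompD'[OF q p Vc] cscalar_prod_self[OF qc] by simp
  have "H *\<^sub>v q = of_real \<mu> \<cdot>\<^sub>v a - H *\<^sub>v p"
    unfolding q_def Ha[symmetric] by (rule mult_minus_distrib_mat_vec[OF H a(1) pc])
  then have "qform H q = \<mu> * (vnorm q)^2 - Re ((H *\<^sub>v p) \<bullet>c q)"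
    unfolding qform_def using a(1) pc qc H aq
    by (simp add: cscalar_prod_minus_left[of _ N] cscalar_prod_smult_left[of _ N])
  also have "\<dots> \<le> \<mu> * (vnorm q)^2 + c * vnorm p * vnorm q"
    using off p q abs_Re_le_cmod[of "(H *\<^sub>v p) \<bullet>c q"] unfolding offdiag_bounded_def by force
  also have "c * vnorm p * vnorm q \<le> c * vnorm q * vnorm q"
    using small' c vnorm_nonneg[of q] by (intro mult_right_mono mult_left_mono) auto
  finally have "min_energy H (ocomp N V) * (vnorm q)^2 \<le> (\<mu> + c) * (vnorm q)^2"
    using min_energy_le_qform[OF ocomp_csubspace[OF Vc] H q]
    by (simp add: algebra_simps power2_eq_square)
  then show ?thesis using nq by (simp add: mult_right_le_imp_le)
qed

lemma offdiag_bounded_interp: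
  assumes H0: "H0 \<in> carrier_mat N N" and H1: "H1 \<in> carrier_mat N N" and V: "csubspace N V"
    and inv: "\<forall>x\<in>V. H0 *\<^sub>v x \<in> V" and off: "offdiag_bounded N V H1 \<beta>" and \<beta>: "0 \<le> \<beta>"
    and s: "0 \<le> s" "s \<le> 1"
  shows "offdiag_bounded N V (interp H0 H1 s) \<beta>"
  unfolding offdiag_bounded_def
proof (intro ballI)
  fix p q assume p: "p \<in> V" and q: "q \<in> ocomp N V"
  have Vc: "V \<subseteq> carrier_vec N" using V by (simp add: csubspace_def)
  have pc: "p \<in> carrier_vec N" and qc: "q \<in> carrier_vec N"
    using csubspace_carrier[OF V p] ocomp_carrier[OF q] .
  have "(H0 *\<^sub>v p) \<bullet>c q = 0" using inv p ocompD'[OF q _ Vc] by blast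
  then have "cmod ((interp H0 H1 s *\<^sub>v p) \<bullet>c q) = s * cmod ((H1 *\<^sub>v p) \<bullet>c q)"
    using s by (simp add: interp_cscalar_prod[OF H0 H1 pc qc] norm_mult)
  also have "\<dots> \<le> 1 * (\<beta> * vnorm p * vnorm q)"
    using off p q s \<beta> vnorm_nonneg[of p] vnorm_nonneg[of q] unfolding offdiag_bounded_def
    by (intro mult_mono) auto
  finally show "cmod ((interp H0 H1 s *\<^sub>v p) \<bullet>c q) \<le> \<beta> * vnorm p * vnorm q" by simp
qed

lemma two_le_dim:
  assumes V: "csubspace N V" and neV: "unit_vecs_in V \<noteq> {}" and neW: "unit_vecs_in (ocomp N V) \<noteq> {}"
  shows "2 \<le> N"
proof -
  obtain v w where v: "v \<in> V" "vnorm v = 1" and w: "w \<in> ocomp N V" "vnorm w = 1"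
    using neV neW unfolding unit_vecs_in_def by blast
  have vc: "v \<in> carrier_vec N" and wc: "w \<in> carrier_vec N"
    using csubspace_carrier[OF V v(1)] ocomp_carrier[OF w(1)] .
  have "orthonormal N [v]" using vc v(2) cscalar_prod_self[OF vc] by (simp add: orthonormal_def)
  then have "orthonormal N ([v] @ [w])"
    by (rule orthonormal_snoc[OF _ wc])
      (use wc w(2) cscalar_prod_self[OF wc] ocompD[OF w(1) v(1)] in auto)
  then show ?thesis using orthonormal_length_le by fastforce
qed

lemma continuous_on_min_energy_interp:
  assumes "H0 \<in> carrier_mat N N" "H1 \<in> carrier_mat N N" "U \<subseteq> carrier_vec N" "unit_vecs_in U \<noteq> {}"
  shows "continuous_on A (\<lambda>s. min_energy (interp H0 H1 s) U)"
  by (rule lipschitz_imp_continuous_on) (rule min_energy_interp_lipschitz[OF assms])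

lemma exists_balanced_point:
  fixes f g :: "real \<Rightarrow> real"
  assumes cont: "continuous_on {0..1} (\<lambda>s. g s - f s)"
    and start: "f 0 \<le> g 0" and stop: "g 1 - f 1 \<le> \<beta>" and \<beta>: "0 \<le> \<beta>"
  shows "\<exists>s. 0 \<le> s \<and> s \<le> 1 \<and> \<bar>g s - f s\<bar> \<le> \<beta>"
proof (cases "0 \<le> g 1 - f 1")
  case True
  then show ?thesis using stop by (intro exI[of _ 1]) auto
next
  case False
  then obtain s where "0 \<le> s" "s \<le> 1" "g s - f s = 0"
    using IVT2'[of "\<lambda>s. g s - f s" 1 0 0, OF _ _ _ cont] start by auto
  then show ?thesis using \<beta> by (intro exI[of _ s]) auto
qed

lemma unit_vecs_in_ocomp_nonempty:
  assumes V: "csubspace N V" and a: "a \<in> carrier_vec N" "vnorm a = 1"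
    and small: "vnorm (proj N V a) \<le> vnorm (a - proj N V a)"
  shows "unit_vecs_in (ocomp N V) \<noteq> {}"
proof -
  have Vc: "V \<subseteq> carrier_vec N" using V by (simp add: csubspace_def)
  define q where "q = a - proj N V a"
  have q: "q \<in> ocomp N V" unfolding q_def by (rule proj_mem(2)[OF V a(1)])
  have qc: "q \<in> carrier_vec N" using ocomp_carrier[OF q] .
  have "q \<noteq> 0\<^sub>v N"
    using vnorm_ocomp_part_pos[OF V a small] vnorm_eq_0_iff[OF qc] unfolding q_def by auto
  then have "(1 / of_real (vnorm q)) \<cdot>\<^sub>v q \<in> unit_vecs_in (ocomp N V)"
    unfolding unit_vecs_in_def
    using csubspace_smult[OF ocomp_csubspace[OF Vc] q] vnorm_normalize[OF qc] by blast
  then show ?thesis by blast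
qed

theorem min_gap_le_three_offdiag:
  assumes h0: "hermitian N H0" and h1: "hermitian N H1" and V: "csubspace N V"
    and inv: "\<forall>x\<in>V. H0 *\<^sub>v x \<in> V" and off: "offdiag_bounded N V H1 \<beta>" and \<beta>: "0 \<le> \<beta>"
    and a0: "a0 \<in> V" "vnorm a0 = 1" "H0 *\<^sub>v a0 = of_real (lam H0 0) \<cdot>\<^sub>v a0"
    and a1: "a1 \<in> carrier_vec N" "vnorm a1 = 1" "H1 *\<^sub>v a1 = of_real (lam H1 0) \<cdot>\<^sub>v a1"
    and small: "vnorm (proj N V a1) \<le> vnorm (a1 - proj N V a1)"
  shows "(INF s\<in>{0..1}. lam (interp H0 H1 s) 1 - lam (interp H0 H1 s) 0) \<le> 3 * \<beta>"
proof -
  have H0: "H0 \<in> carrier_mat N N" and H1: "H1 \<in> carrier_mat N N"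
    using h0 h1 by (simp_all add: hermitian_iff_adjoint)
  have Vc: "V \<subseteq> carrier_vec N" and Wc: "ocomp N V \<subseteq> carrier_vec N"
    using V ocomp_carrier by (auto simp: csubspace_def)
  have neV: "unit_vecs_in V \<noteq> {}" using a0 by (auto simp: unit_vecs_in_def)
  have neW: "unit_vecs_in (ocomp N V) \<noteq> {}"
    by (rule unit_vecs_in_ocomp_nonempty[OF V a1(1,2) small])
  have N: "0 < N" using two_le_dim[OF V neV neW] by simp
  define EV where "EV s = min_energy (interp H0 H1 s) V" for s
  define EW where "EW s = min_energy (interp H0 H1 s) (ocomp N V)" for s
  have "EV 0 \<le> EW 0"
    using min_energy_le_eigenvalue[OF H0 Vc a0] lam0_le_min_energy[OF h0 Wc neW]
    unfolding EV_def EW_def interp_0[OF H0 H1] by linarith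
  moreover have "EW 1 - EV 1 \<le> \<beta>"
    using min_energy_ocomp_le[OF h1 V off \<beta> a1 small] lam0_le_min_energy[OF h1 Vc neV]
    unfolding EV_def EW_def interp_1[OF H0 H1] by linarith
  moreover have "continuous_on {0..1} (\<lambda>s. EW s - EV s)"
    unfolding EV_def EW_def
    by (intro continuous_on_diff continuous_on_min_energy_interp[OF H0 H1] Wc Vc neW neV)
  ultimately obtain s where s: "0 \<le> s" "s \<le> 1" and bal: "\<bar>EW s - EV s\<bar> \<le> \<beta>"
    using exists_balanced_point[OF _ _ _ \<beta>] by blast
  have gap: "lam (interp H0 H1 s) 1 - lam (interp H0 H1 s) 0 \<le> \<bar>EW s - EV s\<bar> + 2 * \<beta>"
    unfolding EV_def EW_def
    by (rule gap_le_min_energy_blocks[OF hermitian_interp[OF h0 h1] V N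
          offdiag_bounded_interp[OF H0 H1 V inv off \<beta> s] \<beta> neV neW])
  have "bdd_below ((\<lambda>s. lam (interp H0 H1 s) 1 - lam (interp H0 H1 s) 0) ` {0..1})"
    using lam0_le_lam1[OF hermitian_interp[OF h0 h1] two_le_dim[OF V neV neW]]
    by (intro bdd_belowI2[of _ 0]) simp
  then have "(INF s\<in>{0..1}. lam (interp H0 H1 s) 1 - lam (interp H0 H1 s) 0)
      \<le> lam (interp H0 H1 s) 1 - lam (interp H0 H1 s) 0"
    by (rule cINF_lower) (use s in simp)
  then show ?thesis using gap bal by linarith
qed

lemma le_mult_cube_powr_quarter:
  fixes b c :: real
  assumes b: "0 \<le> b" and bc: "b \<le> c"
  shows "b \<le> (b * c^3) powr (1/4)"
proof (cases "b = 0")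
  case False
  then have bp: "0 < b" using b by simp
  have "b * b^3 \<le> b * c^3" by (rule mult_left_mono[OF power_mono[OF bc b] b])
  then have b4: "b^4 \<le> b * c^3" by (simp add: power_Suc[symmetric] numeral_eq_Suc)
  have "b = (b powr 4) powr (1/4)" unfolding powr_powr using bp by simp
  also have "b powr 4 = b^4" using powr_realpow[OF bp, of 4] by simp
  also have "(b^4) powr (1/4) \<le> (b * c^3) powr (1/4)" by (rule powr_mono2) (use b4 bp in auto)
  finally show ?thesis .
qed simp

theorem min_gap_le_escape_rate:
  assumes h0: "hermitian N H0" and h1: "hermitian N H1"
    and g0: "ground_state N H0 a0" and g1: "ground_state N H1 a1"
    and ev: "\<forall>v\<in>S. \<exists>e. eigenvector H0 v e" and VS: "V = cspan N S"
    and pa0: "vnorm (proj N V a0) = 1" and pa1: "vnorm (proj N V a1) \<le> 1/10"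
  shows "(INF s\<in>{0..1}. lam (interp H0 H1 s) 1 - lam (interp H0 H1 s) 0)
    \<le> 3 * (escape_rate N V H1 * opnorm (H0 - H1) ^ 3) powr (1/4)"
proof -
  have H0: "H0 \<in> carrier_mat N N" and H1: "H1 \<in> carrier_mat N N"
    using h0 h1 by (simp_all add: hermitian_iff_adjoint)
  have S: "S \<subseteq> carrier_vec N" using ev H0 by (auto simp: eigenvector_def)
  have V: "csubspace N V" unfolding VS by (rule cspan_csubspace[OF S])
  have inv: "\<forall>x\<in>V. H0 *\<^sub>v x \<in> V" unfolding VS using cspan_eigenvectors_invariant[OF S H0 ev] by blast
  have a0: "a0 \<in> carrier_vec N" "vnorm a0 = 1" "H0 *\<^sub>v a0 = of_real (lam H0 0) \<cdot>\<^sub>v a0"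
    and a1: "a1 \<in> carrier_vec N" "vnorm a1 = 1" "H1 *\<^sub>v a1 = of_real (lam H1 0) \<cdot>\<^sub>v a1"
    using g0 g1 by (simp_all add: ground_state_def)
  have a0V: "a0 \<in> V" using vnorm_proj_eq_imp_mem[OF V a0(1)] pa0 a0(2) by simp
  have neV: "unit_vecs_in V \<noteq> {}" using a0V a0(2) by (auto simp: unit_vecs_in_def)
  define \<beta> where "\<beta> = escape_rate N V H1"
  have \<beta>: "0 \<le> \<beta>" "\<beta> \<le> opnorm (H0 - H1)" unfolding \<beta>_def
    using escape_rate_nonneg[OF V H1 neV] escape_rate_le_opnorm[OF V H0 H1 inv neV] by auto
  have "(INF s\<in>{0..1}. lam (interp H0 H1 s) 1 - lam (interp H0 H1 s) 0) \<le> 3 * \<beta>"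
    unfolding \<beta>_def
    by (rule min_gap_le_three_offdiag[OF h0 h1 V inv escape_rate_offdiag_bounded[OF V H1]
          \<beta>(1)[unfolded \<beta>_def] a0V a0(2,3) a1 vnorm_proj_le_ocomp_part[OF V a1(1,2) pa1]])
  also have "\<dots> \<le> 3 * (\<beta> * opnorm (H0 - H1) ^ 3) powr (1/4)"
    using le_mult_cube_powr_quarter[OF \<beta>] by simp
  finally show ?thesis unfolding \<beta>_def .
qed

theorem lemma2:
  "\<exists>C::real. C > 0 \<and>
    (\<forall>(n::nat) H0 H1 a0 a1 S V.
       hermitian (2^n) H0 \<longrightarrow> hermitian (2^n) H1 \<longrightarrow>
       ground_state (2^n) H0 a0 \<longrightarrow> ground_state (2^n) H1 a1 \<longrightarrow>
       (\<forall>v\<in>S. \<exists>e. eigenvector H0 v e) \<longrightarrow>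
       V = cspan (2^n) S \<longrightarrow>
       vnorm (proj (2^n) V a0) = 1 \<longrightarrow>
       vnorm (proj (2^n) V a1) \<le> 1/10 \<longrightarrow>
       (INF s\<in>{0..1::real}. lam (interp H0 H1 s) 1 - lam (interp H0 H1 s) 0)
         \<le> C * (escape_rate (2^n) V H1 * opnorm (H0 - H1) ^ 3) powr (1/4))"
  using min_gap_le_escape_rate by (intro exI[of _ 3]) auto

end
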